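(* Let $R$ be a (not necessarily discrete) $\Gamma$-ring, and for each $n\ge0$ let $R_n$ be the discrete $\Gamma$-ring formed by the $n$-simplices, $R_n(K)=R(K)_n$. Let $FDL(R)_\ast$ be the simplicial set whose $n$-simplices are the formal difference laws in $R_n$, and $\Gamma(H\mathbb Z,R)_\ast$ the simplicial set whose $n$-simplices are the multiplicative maps $H\mathbb Z\to R_n$ (simplicial structure induced from that of $R$). Then the maps $\phi\mapsto\phi((1,-1))$ (with $(1,-1)\in H\mathbb Z[2]$) define an isomorphism of simplicial sets $\Gamma(H\mathbb Z,R)_\ast\cong FDL(R)_\ast$, natural in $R$.
   Context: Let $[n]=\{0,1,\dots,n\}$, pointed at $0$. A $\Gamma$-space is a functor $F$ from the finite pointed sets $[n]$ (with pointed maps) to pointed simplicial sets with $F[0]$ a point; for a pointed map $f$ we write $f$ also for $F(f)$; $\Sigma_n$ acts on $F[n]$ via permutations of $\{1,\dots,n\}$. We identify $[n]\wedge[m]$ with $[nm]$ via $i\wedge j\mapsto (j-1)n+i$. A $\Gamma$-ring is a $\Gamma$-space $R$ with unit $1\in R[1]$ and associative unital multiplication given by natural maps $R(K)\wedge R(L)\to R(K\wedge L)$, $p\wedge q\mapsto pq$; it is discrete if all $R(K)$ are sets; $0\in R[1]$ denotes the basepoint. For $x\in R[2]$, $x^k\in R[2^k]$ is the $k$-fold product. A multiplicative map of $\Gamma$-rings is a natural transformation preserving units and products. Maps: $p^n_i:[n]\to[n-1]$, $p^n_i(j)=j$ ($j<i$), $p^n_i(i)=0$, $p^n_i(j)=j-1$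 ($j>i$); for $1\le i<j\le n$ and $1\le k\le n-1$, $s^n_{i,j,k}:[n]\to[n-1]$ sends $0\mapsto0$, $i,j\mapsto k$, and the remaining elements order-preservingly and bijectively onto $\{1,\dots,n-1\}\setminus\{k\}$; $d^n_j:[n-1]\to[n]$ is the order-preserving injection missing $j$. $H\mathbb{Z}$ is the $\Gamma$-ring with $H\mathbb{Z}(K)$ the reduced free abelian group on $K$, pointed maps acting by summing coefficients along fibres, unit the inclusion of generators, multiplication $(\sum a_k k)(\sum b_l l)=\sum a_kb_l (k\wedge l)$. For $k\ge1$, split $\{1,\dots,2^k\}=A_+\sqcup A_-$ where $i\in A_+$ iff the binary expansion of $i-1$ has an even number of digits $1$. The special action of $\Sigma_{2^{k-1}}\times\Sigma_{2^{k-1}}$ on $F[2^k]$ is the action of the group of permutations of $\{1,\dots,2^k\}$ preserving $A_+$ and $A_-$. Let $\sigma$ be the nontrivial element of $\Sigma_2$. A formal difference law in a discrete $\Gamma$-ring $R$ is $r\in R[2]$ such that: (1) $p^2_2(r)=1$ and $s^2_{1,2,1}(r)=0$; (2) $p^2_1(r)\,r=r\,p^2_1(r)=\sigma(r)$ in $R[2]$; (3) for every $k\ge1$, $r^k$ is fixed under the special action; (4) for every $k\ge1$, all $1\le i<j\le 2^k$ with one of $i,j$ in $A_+$ and the other in $A_-$, and all $1\le l\le 2^k-1$: $s^{2^k}_{i,j,l}(r^k)=d^{2^k-1}_l\,p^{2^k-1}_i\,p^{2^k}_j(r^k)$. *)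

theory Defs
  imports Main
begin

text \<open>A pointed map [n] -> [m] is represented extensionally by a function nat => nat
  which is 0 at 0, lands in {0..m} on {0..n}, and is 0 outside {0..n}.\<close>

definition ptd_map :: "nat \<Rightarrow> nat \<Rightarrow> (nat \<Rightarrow> nat) \<Rightarrow> bool" where
  "ptd_map n m f \<longleftrightarrow> f 0 = 0 \<and> (\<forall>i\<le>n. f i \<le> m) \<and> (\<forall>i>n. f i = 0)"

definition idp :: "nat \<Rightarrow> nat \<Rightarrow> nat" where
  "idp n = (\<lambda>i. if i \<le> n then i else 0)"

text \<open>Smash product f \<and> g : [n*m] -> [n'*m'] of f : [n] -> [n'] and g : [m] -> [m'],
  using the identification [n]\<and>[m] = [nm], i\<and>j \<mapsto> (j-1)n+i.\<close>

definition smash_map :: "nat \<Rightarrow> nat \<Rightarrow> (nat \<Rightarrow> nat) \<Rightarrow> nat \<Rightarrow> (nat \<Rightarrow> nat) \<Rightarrow> nat \<Rightarrow> nat" where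
  "smash_map n n' f m g = (\<lambda>k. if 1 \<le> k \<and> k \<le> n * m then
      (let i = (k - 1) mod n + 1; j = (k - 1) div n + 1 in
        if f i = 0 \<or> g j = 0 then 0 else (g j - 1) * n' + f i)
    else 0)"

record 'a gring =
  gcar  :: "nat \<Rightarrow> 'a set"
  gbase :: "nat \<Rightarrow> 'a"
  gact  :: "nat \<Rightarrow> nat \<Rightarrow> (nat \<Rightarrow> nat) \<Rightarrow> 'a \<Rightarrow> 'a"
  gone  :: "'a"
  gmul  :: "nat \<Rightarrow> nat \<Rightarrow> 'a \<Rightarrow> 'a \<Rightarrow> 'a"

definition discrete_gamma_ring :: "'a gring \<Rightarrow> bool" where
  "discrete_gamma_ring R \<longleftrightarrow>
     (\<forall>n. gbase R n \<in> gcar R n) \<and>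
     gcar R 0 = {gbase R 0} \<and>
     (\<forall>n m f x. ptd_map n m f \<longrightarrow> x \<in> gcar R n \<longrightarrow> gact R n m f x \<in> gcar R m) \<and>
     (\<forall>n m f. ptd_map n m f \<longrightarrow> gact R n m f (gbase R n) = gbase R m) \<and>
     (\<forall>n x. x \<in> gcar R n \<longrightarrow> gact R n n (idp n) x = x) \<and>
     (\<forall>n m k f g x. ptd_map n m f \<longrightarrow> ptd_map m k g \<longrightarrow> x \<in> gcar R n \<longrightarrow>
         gact R n k (g \<circ> f) x = gact R m k g (gact R n m f x)) \<and>
     gone R \<in> gcar R 1 \<and>
     (\<forall>n m x y. x \<in> gcar R n \<longrightarrow> y \<in> gcar R m \<longrightarrow> gmul R n m x y \<in> gcar R (n * m)) \<and>
     (\<forall>n m y. y \<in> gcar R m \<longrightarrow> gmul R n m (gbase R n) y = gbase R (n * m)) \<and>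
     (\<forall>n m x. x \<in> gcar R n \<longrightarrow> gmul R n m x (gbase R m) = gbase R (n * m)) \<and>
     (\<forall>n n' m m' f g x y. ptd_map n n' f \<longrightarrow> ptd_map m m' g \<longrightarrow>
         x \<in> gcar R n \<longrightarrow> y \<in> gcar R m \<longrightarrow>
         gmul R n' m' (gact R n n' f x) (gact R m m' g y)
           = gact R (n * m) (n' * m') (smash_map n n' f m g) (gmul R n m x y)) \<and>
     (\<forall>n m k x y z. x \<in> gcar R n \<longrightarrow> y \<in> gcar R m \<longrightarrow> z \<in> gcar R k \<longrightarrow>
         gmul R (n * m) k (gmul R n m x y) z = gmul R n (m * k) x (gmul R m k y z)) \<and>
     (\<forall>n x. x \<in> gcar R n \<longrightarrow> gmul R 1 n (gone R) x = x \<and> gmul R n 1 x (gone R) = x)"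

definition mult_map :: "'a gring \<Rightarrow> 'b gring \<Rightarrow> (nat \<Rightarrow> 'a \<Rightarrow> 'b) \<Rightarrow> bool" where
  "mult_map R S h \<longleftrightarrow>
     (\<forall>n x. x \<in> gcar R n \<longrightarrow> h n x \<in> gcar S n) \<and>
     (\<forall>n. h n (gbase R n) = gbase S n) \<and>
     (\<forall>n m f x. ptd_map n m f \<longrightarrow> x \<in> gcar R n \<longrightarrow>
         h m (gact R n m f x) = gact S n m f (h n x)) \<and>
     h 1 (gone R) = gone S \<and>
     (\<forall>n m x y. x \<in> gcar R n \<longrightarrow> y \<in> gcar R m \<longrightarrow>
         h (n * m) (gmul R n m x y) = gmul S n m (h n x) (h m y))"

definition mult_maps :: "'a gring \<Rightarrow> 'b gring \<Rightarrow> (nat \<Rightarrow> 'a \<Rightarrow> 'b) set" where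
  "mult_maps R S = {h. mult_map R S h \<and> (\<forall>n x. x \<notin> gcar R n \<longrightarrow> h n x = undefined)}"

definition HZ :: "(nat \<Rightarrow> int) gring" where
  "HZ = \<lparr> gcar = (\<lambda>n. {x. \<forall>i. (i = 0 \<or> n < i) \<longrightarrow> x i = 0}),
          gbase = (\<lambda>n. (\<lambda>_. 0)),
          gact = (\<lambda>n m f x. (\<lambda>j. if 1 \<le> j \<and> j \<le> m then (\<Sum>i\<in>{i. 1 \<le> i \<and> i \<le> n \<and> f i = j}. x i) else 0)),
          gone = (\<lambda>i. if i = 1 then 1 else 0),
          gmul = (\<lambda>n m x y. (\<lambda>k. if 1 \<le> k \<and> k \<le> n * m
                      then x ((k - 1) mod n + 1) * y ((k - 1) div n + 1) else 0)) \<rparr>"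

definition one_minus_one :: "nat \<Rightarrow> int" where
  "one_minus_one = (\<lambda>i. if i = 1 then 1 else if i = 2 then -1 else 0)"

definition proj :: "nat \<Rightarrow> nat \<Rightarrow> nat \<Rightarrow> nat" where
  "proj n i = (\<lambda>j. if j < i then j else if j = i then 0 else if j \<le> n then j - 1 else 0)"

definition sfold :: "nat \<Rightarrow> nat \<Rightarrow> nat \<Rightarrow> nat \<Rightarrow> nat \<Rightarrow> nat" where
  "sfold n i j k = (\<lambda>l. if l = 0 \<or> n < l then 0 else if l = i \<or> l = j then k else
      (let c = l - (if i < l then 1 else 0) - (if j < l then 1 else 0) in
        if c < k then c else c + 1))"

definition dinj :: "nat \<Rightarrow> nat \<Rightarrow> nat \<Rightarrow> nat" where
  "dinj n j = (\<lambda>l. if l \<le> n - 1 then (if l < j then l else l + 1) else 0)"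

definition swap2 :: "nat \<Rightarrow> nat" where
  "swap2 = (\<lambda>i. if i = 1 then 2 else if i = 2 then 1 else 0)"

fun bitcount :: "nat \<Rightarrow> nat" where
  "bitcount n = (if n = 0 then 0 else n mod 2 + bitcount (n div 2))"

definition Apos :: "nat \<Rightarrow> nat set" where
  "Apos k = {i. 1 \<le> i \<and> i \<le> 2 ^ k \<and> even (bitcount (i - 1))}"

primrec gpow :: "'a gring \<Rightarrow> 'a \<Rightarrow> nat \<Rightarrow> 'a" where
  "gpow R x 0 = gone R"
| "gpow R x (Suc k) = gmul R (2 ^ k) 2 (gpow R x k) x"

definition special_perm :: "nat \<Rightarrow> (nat \<Rightarrow> nat) \<Rightarrow> bool" where
  "special_perm k \<pi> \<longleftrightarrow> ptd_map (2 ^ k) (2 ^ k) \<pi> \<and> bij_betw \<pi> {1..2 ^ k} {1..2 ^ k} \<and>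
     (\<forall>i\<in>{1..2 ^ k}. \<pi> i \<in> Apos k \<longleftrightarrow> i \<in> Apos k)"

definition formal_difference_law :: "'a gring \<Rightarrow> 'a \<Rightarrow> bool" where
  "formal_difference_law R r \<longleftrightarrow>
     r \<in> gcar R 2 \<and>
     gact R 2 1 (proj 2 2) r = gone R \<and>
     gact R 2 1 (sfold 2 1 2 1) r = gbase R 1 \<and>
     gmul R 1 2 (gact R 2 1 (proj 2 1) r) r = gact R 2 2 swap2 r \<and>
     gmul R 2 1 r (gact R 2 1 (proj 2 1) r) = gact R 2 2 swap2 r \<and>
     (\<forall>k\<ge>1. \<forall>\<pi>. special_perm k \<pi> \<longrightarrow> gact R (2 ^ k) (2 ^ k) \<pi> (gpow R r k) = gpow R r k) \<and>
     (\<forall>k\<ge>1. \<forall>i j l. 1 \<le> i \<and> i < j \<and> j \<le> 2 ^ k \<and> (i \<in> Apos k \<longleftrightarrow> j \<notin> Apos k) \<and>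
         1 \<le> l \<and> l \<le> 2 ^ k - 1 \<longrightarrow>
         gact R (2 ^ k) (2 ^ k - 1) (sfold (2 ^ k) i j l) (gpow R r k)
         = gact R (2 ^ k - 2) (2 ^ k - 1) (dinj (2 ^ k - 1) l)
             (gact R (2 ^ k - 1) (2 ^ k - 2) (proj (2 ^ k - 1) i)
               (gact R (2 ^ k) (2 ^ k - 1) (proj (2 ^ k) j) (gpow R r k))))"

definition delta_map :: "nat \<Rightarrow> nat \<Rightarrow> (nat \<Rightarrow> nat) \<Rightarrow> bool" where
  "delta_map p q \<theta> \<longleftrightarrow> (\<forall>i j. i \<le> j \<longrightarrow> j \<le> p \<longrightarrow> \<theta> i \<le> \<theta> j) \<and> (\<forall>i\<le>p. \<theta> i \<le> q) \<and> (\<forall>i>p. \<theta> i = 0)"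

definition delta_comp :: "nat \<Rightarrow> (nat \<Rightarrow> nat) \<Rightarrow> (nat \<Rightarrow> nat) \<Rightarrow> nat \<Rightarrow> nat" where
  "delta_comp p \<psi> \<theta> = (\<lambda>i. if i \<le> p then \<psi> (\<theta> i) else 0)"

text \<open>A Gamma-ring in simplicial sets, given by its discrete Gamma-rings of q-simplices Rs q
  and the simplicial operators sop p q \<theta> n : R(n)_q -> R(n)_p for \<theta> : [p] -> [q].\<close>

definition simplicial_gamma_ring ::
    "(nat \<Rightarrow> 'a gring) \<Rightarrow> (nat \<Rightarrow> nat \<Rightarrow> (nat \<Rightarrow> nat) \<Rightarrow> nat \<Rightarrow> 'a \<Rightarrow> 'a) \<Rightarrow> bool" where
  "simplicial_gamma_ring Rs sop \<longleftrightarrow>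
     (\<forall>q. discrete_gamma_ring (Rs q)) \<and>
     (\<forall>p q \<theta>. delta_map p q \<theta> \<longrightarrow> mult_map (Rs q) (Rs p) (sop p q \<theta>)) \<and>
     (\<forall>q n x. x \<in> gcar (Rs q) n \<longrightarrow> sop q q (idp q) n x = x) \<and>
     (\<forall>p q r \<theta> \<psi> n x. delta_map p q \<theta> \<longrightarrow> delta_map q r \<psi> \<longrightarrow> x \<in> gcar (Rs r) n \<longrightarrow>
         sop p r (delta_comp p \<psi> \<theta>) n x = sop p q \<theta> n (sop q r \<psi> n x))"

definition simplicial_gamma_ring_map ::
    "(nat \<Rightarrow> 'a gring) \<Rightarrow> (nat \<Rightarrow> nat \<Rightarrow> (nat \<Rightarrow> nat) \<Rightarrow> nat \<Rightarrow> 'a \<Rightarrow> 'a) \<Rightarrow>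
     (nat \<Rightarrow> 'b gring) \<Rightarrow> (nat \<Rightarrow> nat \<Rightarrow> (nat \<Rightarrow> nat) \<Rightarrow> nat \<Rightarrow> 'b \<Rightarrow> 'b) \<Rightarrow>
     (nat \<Rightarrow> nat \<Rightarrow> 'a \<Rightarrow> 'b) \<Rightarrow> bool" where
  "simplicial_gamma_ring_map Rs sop Rs' sop' g \<longleftrightarrow>
     (\<forall>q. mult_map (Rs q) (Rs' q) (g q)) \<and>
     (\<forall>p q \<theta> n x. delta_map p q \<theta> \<longrightarrow> x \<in> gcar (Rs q) n \<longrightarrow>
         g p n (sop p q \<theta> n x) = sop' p q \<theta> n (g q n x))"

text \<open>Simplicial operator on Gamma(HZ,R)_*: postcomposition (kept extensional).\<close>

definition hz_pull :: "(nat \<Rightarrow> nat \<Rightarrow> (nat \<Rightarrow> nat) \<Rightarrow> nat \<Rightarrow> 'a \<Rightarrow> 'a) \<Rightarrow> nat \<Rightarrow> nat \<Rightarrow> (nat \<Rightarrow> nat)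
    \<Rightarrow> (nat \<Rightarrow> (nat \<Rightarrow> int) \<Rightarrow> 'a) \<Rightarrow> nat \<Rightarrow> (nat \<Rightarrow> int) \<Rightarrow> 'a" where
  "hz_pull sop p q \<theta> \<phi> = (\<lambda>n x. if x \<in> gcar HZ n then sop p q \<theta> n (\<phi> n x) else undefined)"

definition hz_post :: "(nat \<Rightarrow> 'a \<Rightarrow> 'b) \<Rightarrow> (nat \<Rightarrow> (nat \<Rightarrow> int) \<Rightarrow> 'a) \<Rightarrow> nat \<Rightarrow> (nat \<Rightarrow> int) \<Rightarrow> 'b" where
  "hz_post h \<phi> = (\<lambda>n x. if x \<in> gcar HZ n then h n (\<phi> n x) else undefined)"

end

theory Submission
  imports Defs
begin

text \<open>
  Evaluation lands in formal difference laws because multiplicative maps preserve all the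
  defining identities and \<open>t\<close> itself is one.  Conversely, every \<open>a \<in> HZ[n]\<close> is of the form
  \<open>f\<^sub>*(t\<^sup>k)\<close> for a pointed map \<open>f : [2\<^sup>k] \<rightarrow> [n]\<close>, where \<open>t\<^sup>k\<close> is the vector of signs
  \<open>\<plusminus>1\<close> given by the parity of the binary digits.  So a multiplicative map is determined by its
  value \<open>r\<close> on \<open>t\<close>, and to build one from a formal difference law \<open>r\<close> we set
  \<open>\<Phi>(f\<^sub>*(t\<^sup>k)) = f\<^sub>*(r\<^sup>k)\<close>.  The heart of the proof is that this is well defined: by the
  folding axiom (4) pairs of points of opposite sign in one fibre may be cancelled, after which
  two maps with the same signed fibre sums differ by a sign-preserving permutation, which fixes
  \<open>r\<^sup>k\<close> by axiom (3); axiom (1) lets us compare different levels \<open>k\<close>.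
\<close>

lemma ptd_map_comp: "ptd_map n m f \<Longrightarrow> ptd_map m k g \<Longrightarrow> ptd_map n k (g \<circ> f)"
  unfolding ptd_map_def by auto

lemma ptd_map_le: "ptd_map n m f \<Longrightarrow> f x \<le> m"
  unfolding ptd_map_def by (cases "x \<le> n") auto

lemma ptd_map_mono: "ptd_map n m f \<Longrightarrow> n \<le> n' \<Longrightarrow> ptd_map n' m f"
  using ptd_map_le[of n m f] unfolding ptd_map_def by auto

lemma ptd_map_outside: "ptd_map n m f \<Longrightarrow> x = 0 \<or> n < x \<Longrightarrow> f x = 0"
  unfolding ptd_map_def by auto

lemma ptd_map_upd_0: "ptd_map n m f \<Longrightarrow> ptd_map n m (f(a := 0))"
  unfolding ptd_map_def by auto

lemma ptd_map_proj: "1 \<le> i \<Longrightarrow> i \<le> n \<Longrightarrow> ptd_map n (n - 1) (proj n i)"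
  unfolding ptd_map_def proj_def by auto

lemma ptd_map_dinj: "1 \<le> j \<Longrightarrow> ptd_map (n - 1) n (dinj n j)"
  unfolding ptd_map_def dinj_def by auto

lemma ptd_map_sfold: "1 \<le> i \<Longrightarrow> i < j \<Longrightarrow> j \<le> n \<Longrightarrow> 1 \<le> k \<Longrightarrow> k \<le> n - 1 \<Longrightarrow>
    ptd_map n (n - 1) (sfold n i j k)"
  unfolding ptd_map_def sfold_def Let_def by auto

lemma ptd_map_swap2: "ptd_map 2 2 swap2"
  unfolding ptd_map_def swap2_def by auto

lemma ptd_map_idp: "ptd_map n n (idp n)"
  unfolding ptd_map_def idp_def by auto

text \<open>The three maps on the right-hand side of the folding axiom (4).\<close>

lemma ptd_map_pair_maps:
  fixes N :: nat
  assumes "1 \<le> i" "i < j" "j \<le> N" "1 \<le> l"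
  shows "ptd_map N (N - 1) (proj N j)" and "ptd_map (N - 1) (N - 2) (proj (N - 1) i)"
    and "ptd_map (N - 2) (N - 1) (dinj (N - 1) l)"
proof -
  have N2: "N - 1 - 1 = N - 2" by simp
  show "ptd_map N (N - 1) (proj N j)" using assms by (intro ptd_map_proj) auto
  show "ptd_map (N - 1) (N - 2) (proj (N - 1) i)"
    using assms ptd_map_proj[of i "N - 1"] unfolding N2 by simp
  show "ptd_map (N - 2) (N - 1) (dinj (N - 1) l)"
    using assms ptd_map_dinj[of l "N - 1"] unfolding N2 by simp
qed

lemma sfold_off_pair:
  assumes "1 \<le> a" "a < b" "b \<le> N" "1 \<le> l" "l \<le> N - 1" "x \<noteq> a" "x \<noteq> b"
  shows "sfold N a b l x = dinj (N - 1) l (proj (N - 1) a (proj N b x))"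
  using assms unfolding sfold_def dinj_def proj_def Let_def by auto

lemma sfold_on_pair:
  assumes "1 \<le> a" "a < b" "b \<le> N" "1 \<le> l"
  shows "sfold N a b l a = l" and "sfold N a b l b = l"
    and "dinj (N - 1) l (proj (N - 1) a (proj N b a)) = 0"
    and "dinj (N - 1) l (proj (N - 1) a (proj N b b)) = 0"
  using assms unfolding sfold_def dinj_def proj_def Let_def by auto

lemma dinj_misses: "1 \<le> l \<Longrightarrow> dinj N l y \<noteq> l"
  unfolding dinj_def by auto

lemma factor_through_fold:
  fixes N :: nat
  assumes f: "ptd_map N n f" and ab: "1 \<le> a" "a < b" "b \<le> N" and eq: "f a = f b"
  obtains f' where "ptd_map (N - 1) n f'" and "f' \<circ> sfold N a b 1 = f"
    and "f' \<circ> (dinj (N - 1) 1 \<circ> proj (N - 1) a \<circ> proj N b) = f(a := 0, b := 0)"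
proof
  define skip where "skip z = (if z < a then z else if z + 1 < b then z + 1 else z + 2)" for z
  define f' where "f' y = (if y = 1 then f a else if 2 \<le> y \<and> y \<le> N - 1 then f (skip (y - 1)) else 0)" for y
  have inv: "2 \<le> sfold N a b 1 x \<and> sfold N a b 1 x \<le> N - 1 \<and> skip (sfold N a b 1 x - 1) = x"
    if x: "1 \<le> x" "x \<le> N" "x \<noteq> a" "x \<noteq> b" for x
  proof -
    consider "x < a" | "a < x \<and> x < b" | "b < x" using x by linarith
    then show ?thesis using ab x unfolding sfold_def skip_def Let_def by cases auto
  qed
  show "ptd_map (N - 1) n f'" unfolding ptd_map_def f'_def using ptd_map_le[OF f] ab by auto
  show fs: "f' \<circ> sfold N a b 1 = f"
  proof
    fix x
    consider "x = a \<or> x = b" | "x \<noteq> a \<and> x \<noteq> b \<and> 1 \<le> x \<and> x \<le> N" | "x = 0 \<or> N < x" by linarith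
    then show "(f' \<circ> sfold N a b 1) x = f x"
    proof cases
      case 1
      then show ?thesis using sfold_on_pair[of a b N 1] ab eq unfolding f'_def by auto
    next
      case 2
      then show ?thesis using inv[of x] unfolding f'_def by auto
    next
      case 3
      then show ?thesis using ptd_map_outside[OF f] unfolding f'_def sfold_def by auto
    qed
  qed
  show "f' \<circ> (dinj (N - 1) 1 \<circ> proj (N - 1) a \<circ> proj N b) = f(a := 0, b := 0)"
  proof
    fix x
    show "(f' \<circ> (dinj (N - 1) 1 \<circ> proj (N - 1) a \<circ> proj N b)) x = (f(a := 0, b := 0)) x"
    proof (cases "x = a \<or> x = b")
      case True
      then show ?thesis using sfold_on_pair[of a b N 1] ab unfolding f'_def by auto
    next
      case False
      then show ?thesis using sfold_off_pair[of a b N 1 x] ab fun_cong[OF fs, of x] by auto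
    qed
  qed
qed

section \<open>Binary parity signs\<close>

declare bitcount.simps[simp del]

lemma bitcount_0 [simp]: "bitcount 0 = 0"
  by (subst bitcount.simps) simp

lemma bitcount_pos: "n > 0 \<Longrightarrow> bitcount n = n mod 2 + bitcount (n div 2)"
  by (subst bitcount.simps) simp

text \<open>Binary digits of \<open>a + 2\<^sup>k b\<close> with \<open>a < 2\<^sup>k\<close> are those of \<open>a\<close> followed by those of \<open>b\<close>.\<close>

lemma bitcount_add: "a < 2 ^ k \<Longrightarrow> bitcount (a + 2 ^ k * b) = bitcount a + bitcount b"
proof (induction k arbitrary: a)
  case 0
  then show ?case by simp
next
  case (Suc k)
  have "(a + 2 ^ Suc k * b) div 2 = a div 2 + 2 ^ k * b"
    and "(a + 2 ^ Suc k * b) mod 2 = a mod 2" by (simp_all add: mult.assoc)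
  then have "bitcount (a + 2 ^ Suc k * b) = a mod 2 + bitcount (a div 2 + 2 ^ k * b)"
    using bitcount_pos[of "a + 2 ^ Suc k * b"] by (cases "a + 2 ^ Suc k * b = 0") simp_all
  also have "\<dots> = a mod 2 + bitcount (a div 2) + bitcount b"
    using Suc by simp
  also have "a mod 2 + bitcount (a div 2) = bitcount a"
    using bitcount_pos[of a] by (cases "a = 0") simp_all
  finally show ?case .
qed

definition sg :: "nat \<Rightarrow> int" where
  "sg i = (if even (bitcount (i - 1)) then 1 else -1)"

lemma sg_cases: "sg i = 1 \<or> sg i = -1"
  unfolding sg_def by auto

lemma sg_Apos: "1 \<le> i \<Longrightarrow> i \<le> 2 ^ k \<Longrightarrow> sg i = (if i \<in> Apos k then 1 else -1)"
  unfolding sg_def Apos_def by auto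

text \<open>The sign is multiplicative along the identification \<open>[2\<^sup>k] \<and> [2\<^sup>m] = [2\<^sup>k\<^sup>+\<^sup>m]\<close>.\<close>

lemma sg_split: "a < 2 ^ k \<Longrightarrow> sg (a + 2 ^ k * b + 1) = sg (a + 1) * sg (b + 1)"
  using bitcount_add[of a k b] unfolding sg_def by auto

lemma sg_1: "sg 1 = 1" and sg_2: "sg 2 = -1"
  using bitcount_pos[of 1] by (auto simp: sg_def)

text \<open>The two fresh points used to enlarge a fibre by one point of either sign.\<close>

lemma sg_pow2_plus:
  assumes "1 \<le> k" shows "sg (2 ^ k + 1) = -1" and "sg (2 ^ k + 2) = 1"
proof -
  have "(1::nat) < 2 ^ k" using assms by (intro one_less_power) auto
  then show "sg (2 ^ k + 1) = -1" and "sg (2 ^ k + 2) = 1"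
    using sg_split[of 0 k 1] sg_split[of 1 k 1] sg_1 sg_2 by (simp_all add: add.commute numeral_2_eq_2)
qed

lemma pair_index_decode:
  fixes i j n :: nat
  assumes "1 \<le> i" "i \<le> n" "1 \<le> j"
  shows "((j - 1) * n + i - 1) mod n + 1 = i" and "((j - 1) * n + i - 1) div n + 1 = j"
proof -
  have e: "(j - 1) * n + i - 1 = (i - 1) + n * (j - 1)"
    using assms by (simp add: mult.commute)
  have lt: "i - 1 < n" using assms by simp
  then have "n \<noteq> 0" by simp
  then have "(i - 1 + n * (j - 1)) div n = (j - 1) + (i - 1) div n" by (rule div_mult_self2)
  then show "((j - 1) * n + i - 1) div n + 1 = j"
    unfolding e using lt assms by simp
  show "((j - 1) * n + i - 1) mod n + 1 = i"
    unfolding e mod_mult_self2 using lt assms by simp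
qed

lemma pair_index_encode:
  fixes z n :: nat
  assumes "1 \<le> z" shows "((z - 1) div n) * n + ((z - 1) mod n + 1) = z"
  using div_mult_mod_eq[of "z - 1" n] assms by linarith

lemma pair_index_range:
  fixes z n m :: nat
  assumes "1 \<le> z" "z \<le> n * m"
  shows "(z - 1) mod n + 1 \<le> n" and "(z - 1) div n + 1 \<le> m"
proof -
  have "0 < n" and "z - 1 < n * m" using assms by (auto intro: Nat.gr0I)
  then show "(z - 1) mod n + 1 \<le> n" and "(z - 1) div n + 1 \<le> m"
    by (simp_all add: Suc_leI div_less_iff_less_mult mult.commute)
qed

lemma pair_index_bound:
  fixes i j n m :: nat
  assumes "1 \<le> i" "i \<le> n" "1 \<le> j" "j \<le> m"
  shows "(j - 1) * n + i \<le> n * m"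
proof -
  have "(j - 1) * n + i \<le> (m - 1) * n + n"
    using assms by (intro add_le_mono mult_le_mono1 diff_le_mono)
  also have "\<dots> = n * m" using assms by (cases m) (auto simp: algebra_simps)
  finally show ?thesis .
qed

lemma smash_map_at:
  assumes "1 \<le> i" "i \<le> n" "1 \<le> j" "j \<le> m"
  shows "smash_map n n' f m g ((j - 1) * n + i) = (if f i = 0 \<or> g j = 0 then 0 else (g j - 1) * n' + f i)"
  using pair_index_decode[of i n j] pair_index_bound[of i n j m] assms
  unfolding smash_map_def Let_def by simp

lemma smash_map_hit:
  assumes f: "ptd_map n n' f" and g: "ptd_map m m' g"
    and i: "1 \<le> i" "i \<le> n" and j: "1 \<le> j" "j \<le> m" and c: "1 \<le> c1" "c1 \<le> n'" "1 \<le> c2"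
  shows "smash_map n n' f m g ((j - 1) * n + i) = (c2 - 1) * n' + c1 \<longleftrightarrow> f i = c1 \<and> g j = c2"
proof
  assume hit: "smash_map n n' f m g ((j - 1) * n + i) = (c2 - 1) * n' + c1"
  then have nz: "f i \<noteq> 0" "g j \<noteq> 0" and e: "(g j - 1) * n' + f i = (c2 - 1) * n' + c1"
    using smash_map_at[OF i j] c by (auto split: if_splits)
  have "f i \<le> n'" using ptd_map_le[OF f] .
  then show "f i = c1 \<and> g j = c2"
    using pair_index_decode[of "f i" n' "g j"] pair_index_decode[of c1 n' c2] nz c e by auto
qed (use smash_map_at[OF i j] c in auto)

lemma smash_ptd:
  assumes f: "ptd_map n n' f" and g: "ptd_map m m' g"
  shows "ptd_map (n * m) (n' * m') (smash_map n n' f m g)"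
proof -
  have "smash_map n n' f m g z \<le> n' * m'" if z: "1 \<le> z" "z \<le> n * m" for z
  proof -
    define i j where "i = (z - 1) mod n + 1" and "j = (z - 1) div n + 1"
    have "1 \<le> f i \<Longrightarrow> 1 \<le> g j \<Longrightarrow> (g j - 1) * n' + f i \<le> n' * m'"
      using ptd_map_le[OF f] ptd_map_le[OF g] by (intro pair_index_bound)
    then show ?thesis using z unfolding smash_map_def Let_def i_def j_def by auto
  qed
  then show ?thesis unfolding ptd_map_def smash_map_def by auto
qed

text \<open>Smashing with \<open>p\<^sup>2\<^sub>2\<close>, which collapses the second point of \<open>[2]\<close>, restricts a map on
  \<open>[2N] = [N] \<and> [2]\<close> to the first copy of \<open>[N]\<close>; a map defined on \<open>[N]\<close> is unchanged.\<close>

lemma smash_proj22: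
  assumes f: "ptd_map N n f"
  shows "smash_map N n f 2 (proj 2 2) = f"
proof
  fix x
  show "smash_map N n f 2 (proj 2 2) x = f x"
  proof (cases "1 \<le> x \<and> x \<le> N * 2")
    case False
    then show ?thesis using ptd_map_outside[OF f, of x] unfolding smash_map_def by auto
  next
    case True
    show ?thesis
    proof (cases "x \<le> N")
      case le: True
      then have "(x - 1) mod N + 1 = x" "(x - 1) div N + 1 = 1" using True by auto
      then show ?thesis using True le unfolding smash_map_def Let_def proj_def by auto
    next
      case gt: False
      then have "(x - 1) div N = 1" using True by (intro div_nat_eqI) auto
      then show ?thesis using True gt ptd_map_outside[OF f, of x] unfolding smash_map_def Let_def proj_def by auto
    qed
  qed
qed

section \<open>The Gamma-ring HZ\<close>

lemma HZ_simps [simp]: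
  "gcar HZ n = {x. \<forall>i. (i = 0 \<or> n < i) \<longrightarrow> x i = 0}"
  "gbase HZ n = (\<lambda>_. 0)"
  "gact HZ n m f x = (\<lambda>j. if 1 \<le> j \<and> j \<le> m then (\<Sum>i\<in>{i. 1 \<le> i \<and> i \<le> n \<and> f i = j}. x i) else 0)"
  "gone HZ = (\<lambda>i. if i = 1 then 1 else 0)"
  "gmul HZ n m x y = (\<lambda>k. if 1 \<le> k \<and> k \<le> n * m
                      then x ((k - 1) mod n + 1) * y ((k - 1) div n + 1) else 0)"
  by (simp_all add: HZ_def)

lemma HZ_gact_at:
  "1 \<le> c \<Longrightarrow> c \<le> m \<Longrightarrow> gact HZ n m f x c = (\<Sum>i\<in>{i. 1 \<le> i \<and> i \<le> n \<and> f i = c}. x i)"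
  by simp

lemma finite_fibre [simp]: "finite {i. 1 \<le> i \<and> i \<le> (N::nat) \<and> P i}"
  by (rule finite_subset[of _ "{..N}"]) auto

lemma HZ_comp:
  assumes f: "ptd_map n m f" and g: "ptd_map m k g"
  shows "gact HZ m k g (gact HZ n m f x) = gact HZ n k (g \<circ> f) x"
proof
  fix j
  show "gact HZ m k g (gact HZ n m f x) j = gact HZ n k (g \<circ> f) x j"
  proof (cases "1 \<le> j \<and> j \<le> k")
    case False then show ?thesis by auto
  next
    case True
    define S where "S = {i. 1 \<le> i \<and> i \<le> n \<and> g (f i) = j}"
    define T where "T = {y. 1 \<le> y \<and> y \<le> m \<and> g y = j}"
    have sub: "f ` S \<subseteq> T"
    proof
      fix y assume "y \<in> f ` S"
      then obtain i where i: "i \<in> S" "y = f i" by auto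
      have "g 0 = 0" using ptd_map_outside[OF g, of 0] by simp
      then have "f i \<noteq> 0" using i True unfolding S_def by (metis (mono_tags) mem_Collect_eq not_one_le_zero)
      then show "y \<in> T" using i ptd_map_le[OF f] unfolding S_def T_def by auto
    qed
    have "gact HZ m k g (gact HZ n m f x) j = (\<Sum>y\<in>T. \<Sum>i\<in>{i. i \<in> S \<and> f i = y}. x i)"
      using True unfolding S_def T_def by (auto intro!: sum.cong)
    also have "\<dots> = (\<Sum>i\<in>S. x i)"
      by (rule sum.group) (use sub in \<open>auto simp: S_def T_def\<close>)
    also have "\<dots> = gact HZ n k (g \<circ> f) x j" using True unfolding S_def by simp
    finally show ?thesis .
  qed
qed

text \<open>Summing along a fibre of \<open>f \<and> g\<close> is summing along the product of a fibre of \<open>f\<close> and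
  a fibre of \<open>g\<close>; this gives naturality of the multiplication of \<open>HZ\<close>.\<close>

lemma smash_fibre_sum:
  assumes f: "ptd_map n n' f" and g: "ptd_map m m' g" and c1: "1 \<le> c1" "c1 \<le> n'" and c2: "1 \<le> c2"
  shows "(\<Sum>z\<in>{z. 1 \<le> z \<and> z \<le> n * m \<and> smash_map n n' f m g z = (c2 - 1) * n' + c1}.
            h ((z - 1) mod n + 1) ((z - 1) div n + 1))
       = (\<Sum>(i, j)\<in>{i. 1 \<le> i \<and> i \<le> n \<and> f i = c1} \<times> {j. 1 \<le> j \<and> j \<le> m \<and> g j = c2}. h i j)"
    (is "sum _ ?Z = sum _ (?I \<times> ?J)")
proof -
  define enc dec where "enc = (\<lambda>(i, j). (j - 1) * n + i)"
    and "dec = (\<lambda>z. ((z - 1) mod n + 1, (z - 1) div n + 1))"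
  have in_Z: "enc (i, j) \<in> ?Z \<longleftrightarrow> (i, j) \<in> ?I \<times> ?J"
    if "1 \<le> i" "i \<le> n" "1 \<le> j" "j \<le> m" for i j
    using that smash_map_hit[OF f g that c1 c2] pair_index_bound[OF that] unfolding enc_def by simp
  have dec_enc: "dec (enc p) = p" if "p \<in> ?I \<times> ?J" for p
    using that pair_index_decode unfolding enc_def dec_def by auto
  show ?thesis
  proof (rule sum.reindex_bij_witness[symmetric, of _ dec enc])
    fix p assume "p \<in> ?I \<times> ?J"
    then show "dec (enc p) = p" and "enc p \<in> ?Z"
      using in_Z[of "fst p" "snd p"] dec_enc by auto
    have "((enc p - 1) mod n + 1, (enc p - 1) div n + 1) = p"
      using dec_enc \<open>p \<in> ?I \<times> ?J\<close> unfolding dec_def by simp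
    then show "h ((enc p - 1) mod n + 1) ((enc p - 1) div n + 1) = (case p of (i, j) \<Rightarrow> h i j)"
      by (auto split: prod.splits)
  next
    fix z assume z: "z \<in> ?Z"
    then show enc_dec: "enc (dec z) = z" using pair_index_encode[of z n] unfolding enc_def dec_def by simp
    show "dec z \<in> ?I \<times> ?J"
      using z in_Z[of "fst (dec z)" "snd (dec z)"] pair_index_range[of z n m] enc_dec unfolding dec_def by auto
  qed
qed

lemma HZ_nat:
  assumes f: "ptd_map n n' f" and g: "ptd_map m m' g"
  shows "gmul HZ n' m' (gact HZ n n' f x) (gact HZ m m' g y)
       = gact HZ (n * m) (n' * m') (smash_map n n' f m g) (gmul HZ n m x y)"
proof
  fix c
  show "gmul HZ n' m' (gact HZ n n' f x) (gact HZ m m' g y) c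
       = gact HZ (n * m) (n' * m') (smash_map n n' f m g) (gmul HZ n m x y) c"
  proof (cases "1 \<le> c \<and> c \<le> n' * m'")
    case False then show ?thesis by auto
  next
    case True
    define c1 c2 where "c1 = (c - 1) mod n' + 1" and "c2 = (c - 1) div n' + 1"
    have c1: "1 \<le> c1" "c1 \<le> n'" and c2: "1 \<le> c2" "c2 \<le> m'"
      using True pair_index_range[of c n' m'] unfolding c1_def c2_def by auto
    have c: "c = (c2 - 1) * n' + c1"
      using pair_index_encode[of c n'] True unfolding c1_def c2_def by simp
    have "gmul HZ n' m' (gact HZ n n' f x) (gact HZ m m' g y) c
        = (\<Sum>i\<in>{i. 1 \<le> i \<and> i \<le> n \<and> f i = c1}. x i) * (\<Sum>j\<in>{j. 1 \<le> j \<and> j \<le> m \<and> g j = c2}. y j)"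
      using True c1 c2 unfolding c1_def c2_def by simp
    also have "\<dots> = (\<Sum>(i, j)\<in>{i. 1 \<le> i \<and> i \<le> n \<and> f i = c1} \<times> {j. 1 \<le> j \<and> j \<le> m \<and> g j = c2}. x i * y j)"
      by (simp add: sum_product sum.cartesian_product)
    also have "\<dots> = gact HZ (n * m) (n' * m') (smash_map n n' f m g) (gmul HZ n m x y) c"
      using smash_fibre_sum[OF f g c1 c2(1), of "\<lambda>i j. x i * y j", folded c] True
      by (auto intro!: sum.cong)
    finally show ?thesis .
  qed
qed

text \<open>The sign vector \<open>(sg 1, \<dots>, sg 2\<^sup>k)\<close>; it is multiplicative under smash products, hence
  equal to the power \<open>t\<^sup>k\<close> of \<open>t = (1,-1)\<close>.\<close>

definition sgvec :: "nat \<Rightarrow> nat \<Rightarrow> int" where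
  "sgvec k = (\<lambda>i. if 1 \<le> i \<and> i \<le> 2 ^ k then sg i else 0)"

lemma sgvec_mul: "gmul HZ (2 ^ k) (2 ^ m) (sgvec k) (sgvec m) = sgvec (k + m)"
proof
  fix z
  show "gmul HZ (2 ^ k) (2 ^ m) (sgvec k) (sgvec m) z = sgvec (k + m) z"
  proof (cases "1 \<le> z \<and> z \<le> 2 ^ k * 2 ^ m")
    case False then show ?thesis by (auto simp: sgvec_def power_add)
  next
    case True
    define a b where "a = (z - 1) mod 2 ^ k" and "b = (z - 1) div 2 ^ k"
    have "a + 1 \<le> 2 ^ k" "b + 1 \<le> 2 ^ m"
      using pair_index_range[of z "2 ^ k" "2 ^ m"] True unfolding a_def b_def by auto
    moreover have "z = a + 2 ^ k * b + 1"
      using pair_index_encode[of z "2 ^ k"] True unfolding a_def b_def by simp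
    ultimately show ?thesis
      using True sg_split[of a k b] unfolding sgvec_def a_def b_def by (simp add: power_add)
  qed
qed

lemma sgvec_1: "sgvec 1 = one_minus_one"
  using sg_1 sg_2 unfolding sgvec_def one_minus_one_def by (auto simp: fun_eq_iff)

lemma HZ_gpow_one_minus_one: "gpow HZ one_minus_one k = sgvec k"
proof (induction k)
  case 0
  show ?case using sg_1 by (auto simp: sgvec_def fun_eq_iff)
next
  case (Suc k)
  have "gpow HZ one_minus_one (Suc k) = gmul HZ (2 ^ k) (2 ^ 1) (sgvec k) (sgvec 1)"
    using Suc unfolding sgvec_1 by (simp del: HZ_simps)
  also have "\<dots> = sgvec (Suc k)" using sgvec_mul[of k 1] by simp
  finally show ?case .
qed

lemma sum_upto_2:
  "(\<Sum>i\<in>{i::nat. 1 \<le> i \<and> i \<le> 2 \<and> P i}. f i) = (if P 1 then f 1 else 0) + (if P 2 then f 2 else 0)"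
proof -
  have eq: "{i::nat. 1 \<le> i \<and> i \<le> 2 \<and> P i} = {i\<in>{1..2}. P i}" by auto
  show ?thesis unfolding eq sum.inter_filter[OF finite_atLeastAtMost] by (simp add: numeral_2_eq_2)
qed

text \<open>Special permutations preserve signs, hence fix \<open>t\<^sup>k\<close>.\<close>

lemma HZ_special_perm:
  assumes "special_perm k \<pi>"
  shows "gact HZ (2 ^ k) (2 ^ k) \<pi> (sgvec k) = sgvec k"
proof
  fix c
  have bij: "bij_betw \<pi> {1..2 ^ k} {1..2 ^ k}" and pres: "\<forall>i\<in>{1..2 ^ k}. \<pi> i \<in> Apos k \<longleftrightarrow> i \<in> Apos k"
    using assms unfolding special_perm_def by auto
  show "gact HZ (2 ^ k) (2 ^ k) \<pi> (sgvec k) c = sgvec k c"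
  proof (cases "1 \<le> c \<and> c \<le> 2 ^ k")
    case False then show ?thesis by (auto simp: sgvec_def)
  next
    case True
    then obtain x where x: "x \<in> {1..2 ^ k}" "\<pi> x = c"
      using bij unfolding bij_betw_def by (metis atLeastAtMost_iff imageE)
    then have "{i. 1 \<le> i \<and> i \<le> 2 ^ k \<and> \<pi> i = c} = {x}"
      using bij unfolding bij_betw_def inj_on_def by auto
    then have "gact HZ (2 ^ k) (2 ^ k) \<pi> (sgvec k) c = sg x" using True x by (simp add: sgvec_def)
    also have "\<dots> = sg c" using sg_Apos[of x k] sg_Apos[of c k] x pres True by auto
    finally show ?thesis using True by (simp add: sgvec_def)
  qed
qed

text \<open>Folding a pair of opposite signs cancels their contributions in \<open>t\<^sup>k\<close>.\<close>

lemma HZ_opposite_pair: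
  assumes k: "1 \<le> k" and ijl: "1 \<le> i" "i < j" "j \<le> 2 ^ k" "i \<in> Apos k \<longleftrightarrow> j \<notin> Apos k"
    "1 \<le> l" "l \<le> 2 ^ k - 1"
  shows "gact HZ (2 ^ k) (2 ^ k - 1) (sfold (2 ^ k) i j l) (sgvec k)
       = gact HZ (2 ^ k) (2 ^ k - 1) (dinj (2 ^ k - 1) l \<circ> proj (2 ^ k - 1) i \<circ> proj (2 ^ k) j) (sgvec k)"
    (is "gact HZ ?N _ ?s ?X = gact HZ _ _ ?d _")
proof
  fix c
  show "gact HZ ?N (?N - 1) ?s ?X c = gact HZ ?N (?N - 1) ?d ?X c"
  proof (cases "1 \<le> c \<and> c \<le> ?N - 1")
    case False then show ?thesis by auto
  next
    case c: True
    show ?thesis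
    proof (cases "c = l")
      case True
      have "?s x = l \<longleftrightarrow> x = i \<or> x = j" for x
      proof (cases "x = i \<or> x = j")
        case False
        then show ?thesis using sfold_off_pair[of i j ?N l x] dinj_misses[of l] ijl by auto
      qed (use sfold_on_pair[of i j ?N l] ijl in auto)
      then have S: "{x. 1 \<le> x \<and> x \<le> ?N \<and> ?s x = c} = {i, j}" using ijl True by auto
      have D: "{x. 1 \<le> x \<and> x \<le> ?N \<and> ?d x = c} = {}" using dinj_misses[of l] ijl True by auto
      have "?X i + ?X j = 0"
        using sg_Apos[of i k] sg_Apos[of j k] ijl by (auto simp: sgvec_def)
      then show ?thesis unfolding HZ_gact_at[OF c[THEN conjunct1] c[THEN conjunct2]] S D
        using ijl by simp
    next
      case False
      have "?s x = ?d x \<or> (x \<in> {i, j} \<and> ?s x = l \<and> ?d x = 0)" for x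
        using sfold_off_pair[of i j ?N l x] sfold_on_pair[of i j ?N l] ijl by auto
      then have "{x. 1 \<le> x \<and> x \<le> ?N \<and> ?s x = c} = {x. 1 \<le> x \<and> x \<le> ?N \<and> ?d x = c}"
        using c False by (metis (mono_tags, lifting) not_one_le_zero)
      then show ?thesis by simp
    qed
  qed
qed

text \<open>Closure of the carriers under the operations; this is all of the Gamma-ring
  structure that is needed on the source of a multiplicative map.\<close>

definition gring_closed :: "'a gring \<Rightarrow> bool" where
  "gring_closed R \<longleftrightarrow> gone R \<in> gcar R 1 \<and> (\<forall>n. gbase R n \<in> gcar R n) \<and>
     (\<forall>n m x y. x \<in> gcar R n \<longrightarrow> y \<in> gcar R m \<longrightarrow> gmul R n m x y \<in> gcar R (n * m)) \<and>
     (\<forall>n m f x. ptd_map n m f \<longrightarrow> x \<in> gcar R n \<longrightarrow> gact R n m f x \<in> gcar R m)"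

lemma discrete_gamma_ring_closed: "discrete_gamma_ring R \<Longrightarrow> gring_closed R"
  unfolding discrete_gamma_ring_def gring_closed_def by simp

lemma HZ_closed: "gring_closed HZ"
  unfolding gring_closed_def by simp

lemma one_minus_one_car: "one_minus_one \<in> gcar HZ 2"
  by (simp add: one_minus_one_def)

lemma gpow_car: "gring_closed R \<Longrightarrow> r \<in> gcar R 2 \<Longrightarrow> gpow R r k \<in> gcar R (2 ^ k)"
proof (induction k)
  case 0 then show ?case by (simp add: gring_closed_def)
next
  case (Suc k)
  then have "gmul R (2 ^ k) 2 (gpow R r k) r \<in> gcar R (2 ^ k * 2)"
    unfolding gring_closed_def by blast
  then show ?case by (simp add: mult.commute)
qed

lemma mult_mapD:
  assumes "mult_map R S h"
  shows "x \<in> gcar R n \<Longrightarrow> h n x \<in> gcar S n"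
    and "h n (gbase R n) = gbase S n"
    and "ptd_map n m f \<Longrightarrow> x \<in> gcar R n \<Longrightarrow> h m (gact R n m f x) = gact S n m f (h n x)"
    and "h 1 (gone R) = gone S"
    and "x \<in> gcar R n \<Longrightarrow> y \<in> gcar R m \<Longrightarrow> h (n * m) (gmul R n m x y) = gmul S n m (h n x) (h m y)"
  using assms unfolding mult_map_def by blast+

lemma mult_map_gpow:
  assumes h: "mult_map R S h" and R: "gring_closed R" and r: "r \<in> gcar R 2"
  shows "h (2 ^ k) (gpow R r k) = gpow S (h 2 r) k"
proof (induction k)
  case 0 then show ?case using mult_mapD(4)[OF h] by simp
next
  case (Suc k)
  have "h (2 ^ k * 2) (gmul R (2 ^ k) 2 (gpow R r k) r) = gmul S (2 ^ k) 2 (h (2 ^ k) (gpow R r k)) (h 2 r)"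
    using mult_mapD(5)[OF h gpow_car[OF R r] r] .
  then show ?case using Suc by (simp add: mult.commute)
qed

lemma mult_map_comp:
  assumes "mult_map R S \<phi>" and "mult_map S T h"
  shows "mult_map R T (\<lambda>n x. h n (\<phi> n x))"
  using assms unfolding mult_map_def by simp

lemma mult_map_cong:
  assumes "mult_map R S \<phi>" and R: "gring_closed R" and eq: "\<And>n x. x \<in> gcar R n \<Longrightarrow> \<psi> n x = \<phi> n x"
  shows "mult_map R S \<psi>"
proof -
  have "gbase R n \<in> gcar R n" "gone R \<in> gcar R 1"
    and "ptd_map n m f \<Longrightarrow> x \<in> gcar R n \<Longrightarrow> gact R n m f x \<in> gcar R m"
    and "x \<in> gcar R n \<Longrightarrow> y \<in> gcar R m \<Longrightarrow> gmul R n m x y \<in> gcar R (n * m)"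
    for n m f x y using R unfolding gring_closed_def by blast+
  then show ?thesis using assms(1) unfolding mult_map_def by (simp add: eq)
qed

lemma hz_post_mult_maps:
  assumes "\<phi> \<in> mult_maps HZ S" and "mult_map S T h"
  shows "hz_post h \<phi> \<in> mult_maps HZ T" and "hz_post h \<phi> 2 one_minus_one = h 2 (\<phi> 2 one_minus_one)"
proof -
  have "mult_map HZ T (\<lambda>n x. h n (\<phi> n x))"
    using assms mult_map_comp unfolding mult_maps_def by blast
  then have "mult_map HZ T (hz_post h \<phi>)"
    by (rule mult_map_cong[OF _ HZ_closed]) (simp add: hz_post_def)
  then show "hz_post h \<phi> \<in> mult_maps HZ T"
    unfolding mult_maps_def hz_post_def by (simp del: HZ_simps)
  show "hz_post h \<phi> 2 one_minus_one = h 2 (\<phi> 2 one_minus_one)"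
    using one_minus_one_car unfolding hz_post_def by (simp del: HZ_simps)
qed

lemma hz_pull_is_hz_post: "hz_pull sop p q \<theta> = hz_post (sop p q \<theta>)"
  unfolding hz_pull_def hz_post_def by simp

lemma fdlD:
  assumes "formal_difference_law R r"
  shows fdl_car: "r \<in> gcar R 2"
    and fdl_unit: "gact R 2 1 (proj 2 2) r = gone R"
    and fdl_fold: "gact R 2 1 (sfold 2 1 2 1) r = gbase R 1"
    and fdl_left: "gmul R 1 2 (gact R 2 1 (proj 2 1) r) r = gact R 2 2 swap2 r"
    and fdl_right: "gmul R 2 1 r (gact R 2 1 (proj 2 1) r) = gact R 2 2 swap2 r"
    and fdl_special: "1 \<le> k \<Longrightarrow> special_perm k \<pi> \<Longrightarrow> gact R (2 ^ k) (2 ^ k) \<pi> (gpow R r k) = gpow R r k"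
    and fdl_pair: "1 \<le> k \<Longrightarrow> 1 \<le> i \<Longrightarrow> i < j \<Longrightarrow> j \<le> 2 ^ k \<Longrightarrow> (i \<in> Apos k \<longleftrightarrow> j \<notin> Apos k) \<Longrightarrow>
         1 \<le> l \<Longrightarrow> l \<le> 2 ^ k - 1 \<Longrightarrow>
         gact R (2 ^ k) (2 ^ k - 1) (sfold (2 ^ k) i j l) (gpow R r k)
         = gact R (2 ^ k - 2) (2 ^ k - 1) (dinj (2 ^ k - 1) l)
             (gact R (2 ^ k - 1) (2 ^ k - 2) (proj (2 ^ k - 1) i)
               (gact R (2 ^ k) (2 ^ k - 1) (proj (2 ^ k) j) (gpow R r k)))"
  using assms unfolding formal_difference_law_def by blast+

lemma mult_map_fold:
  assumes h: "mult_map R S h" and R: "gring_closed R" and X: "X \<in> gcar R N"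
    and ijl: "1 \<le> i" "i < j" "j \<le> N" "1 \<le> l" "l \<le> N - 1"
    and eq: "gact R N (N - 1) (sfold N i j l) X
      = gact R (N - 2) (N - 1) (dinj (N - 1) l) (gact R (N - 1) (N - 2) (proj (N - 1) i) (gact R N (N - 1) (proj N j) X))"
  shows "gact S N (N - 1) (sfold N i j l) (h N X)
      = gact S (N - 2) (N - 1) (dinj (N - 1) l) (gact S (N - 1) (N - 2) (proj (N - 1) i) (gact S N (N - 1) (proj N j) (h N X)))"
proof -
  note act = mult_mapD(3)[OF h]
  have cact: "\<And>n m f x. ptd_map n m f \<Longrightarrow> x \<in> gcar R n \<Longrightarrow> gact R n m f x \<in> gcar R m"
    using R unfolding gring_closed_def by blast
  have ps: "ptd_map N (N - 1) (sfold N i j l)" using ijl by (intro ptd_map_sfold)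
  have pj: "ptd_map N (N - 1) (proj N j)" and pi: "ptd_map (N - 1) (N - 2) (proj (N - 1) i)"
    and pd: "ptd_map (N - 2) (N - 1) (dinj (N - 1) l)"
    using ptd_map_pair_maps[of i j N l] ijl by auto
  have X1: "gact R N (N - 1) (proj N j) X \<in> gcar R (N - 1)" using cact[OF pj X] .
  show ?thesis
    using arg_cong[OF eq, of "h (N - 1)"] act[OF ps X] act[OF pd cact[OF pi X1]] act[OF pi X1] act[OF pj X]
    by simp
qed

lemma mult_map_fdl:
  assumes h: "mult_map R S h" and R: "gring_closed R" and F: "formal_difference_law R r"
  shows "formal_difference_law S (h 2 r)"
proof -
  note act = mult_mapD(3)[OF h] and mul = mult_mapD(5)[OF h]
  have r: "r \<in> gcar R 2" by (rule fdl_car[OF F])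
  have p22: "ptd_map 2 1 (proj 2 2)" and p21: "ptd_map 2 1 (proj 2 1)"
    and s: "ptd_map 2 1 (sfold 2 1 2 1)"
    using ptd_map_proj[of 2 2] ptd_map_proj[of 1 2] ptd_map_sfold[of 1 2 2 1] by auto
  have pr: "gact R 2 1 (proj 2 1) r \<in> gcar R 1"
    using R p21 r unfolding gring_closed_def by blast
  have X: "\<And>k. gpow R r k \<in> gcar R (2 ^ k)" and hX: "\<And>k. h (2 ^ k) (gpow R r k) = gpow S (h 2 r) k"
    using gpow_car[OF R r] mult_map_gpow[OF h R r] by blast+
  show ?thesis unfolding formal_difference_law_def
  proof (intro conjI allI impI)
    show "h 2 r \<in> gcar S 2" using mult_mapD(1)[OF h r] .
    show "gact S 2 1 (proj 2 2) (h 2 r) = gone S"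
      using act[OF p22 r] fdl_unit[OF F] mult_mapD(4)[OF h] by simp
    show "gact S 2 1 (sfold 2 1 2 1) (h 2 r) = gbase S 1"
      using act[OF s r] fdl_fold[OF F] mult_mapD(2)[OF h] by simp
    show "gmul S 1 2 (gact S 2 1 (proj 2 1) (h 2 r)) (h 2 r) = gact S 2 2 swap2 (h 2 r)"
      using mul[OF pr r] act[OF p21 r] act[OF ptd_map_swap2 r] fdl_left[OF F] by simp
    show "gmul S 2 1 (h 2 r) (gact S 2 1 (proj 2 1) (h 2 r)) = gact S 2 2 swap2 (h 2 r)"
      using mul[OF r pr] act[OF p21 r] act[OF ptd_map_swap2 r] fdl_right[OF F] by simp
  next
    fix k :: nat and \<pi> assume "1 \<le> k" and sp: "special_perm k \<pi>"
    then have "ptd_map (2 ^ k) (2 ^ k) \<pi>" unfolding special_perm_def by blast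
    then show "gact S (2 ^ k) (2 ^ k) \<pi> (gpow S (h 2 r) k) = gpow S (h 2 r) k"
      using act[OF _ X[of k]] hX[of k] fdl_special[OF F \<open>1 \<le> k\<close> sp] by metis
  next
    fix k i j l :: nat
    assume k: "1 \<le> k" and ijl: "1 \<le> i \<and> i < j \<and> j \<le> 2 ^ k \<and> (i \<in> Apos k \<longleftrightarrow> j \<notin> Apos k) \<and>
      1 \<le> l \<and> l \<le> 2 ^ k - 1"
    have "gact S (2 ^ k) (2 ^ k - 1) (sfold (2 ^ k) i j l) (h (2 ^ k) (gpow R r k))
      = gact S (2 ^ k - 2) (2 ^ k - 1) (dinj (2 ^ k - 1) l) (gact S (2 ^ k - 1) (2 ^ k - 2) (proj (2 ^ k - 1) i)
          (gact S (2 ^ k) (2 ^ k - 1) (proj (2 ^ k) j) (h (2 ^ k) (gpow R r k))))"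
      using ijl by (intro mult_map_fold[OF h R X] fdl_pair[OF F k]) auto
    then show "gact S (2 ^ k) (2 ^ k - 1) (sfold (2 ^ k) i j l) (gpow S (h 2 r) k)
      = gact S (2 ^ k - 2) (2 ^ k - 1) (dinj (2 ^ k - 1) l) (gact S (2 ^ k - 1) (2 ^ k - 2) (proj (2 ^ k - 1) i)
          (gact S (2 ^ k) (2 ^ k - 1) (proj (2 ^ k) j) (gpow S (h 2 r) k)))"
      unfolding hX .
  qed
qed

lemma HZ_fdl: "formal_difference_law HZ one_minus_one"
  unfolding formal_difference_law_def HZ_gpow_one_minus_one
proof (intro conjI allI impI)
  show "one_minus_one \<in> gcar HZ 2" by (rule one_minus_one_car)
  show "gact HZ 2 1 (proj 2 2) one_minus_one = gone HZ"
    by (rule ext) (simp only: HZ_simps sum_upto_2, simp add: proj_def one_minus_one_def)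
  show "gact HZ 2 1 (sfold 2 1 2 1) one_minus_one = gbase HZ 1"
    by (rule ext) (simp only: HZ_simps sum_upto_2, simp add: sfold_def one_minus_one_def)
  show "gmul HZ 1 2 (gact HZ 2 1 (proj 2 1) one_minus_one) one_minus_one = gact HZ 2 2 swap2 one_minus_one"
    by (rule ext) (simp only: HZ_simps sum_upto_2, auto simp: proj_def swap2_def one_minus_one_def)
  show "gmul HZ 2 1 one_minus_one (gact HZ 2 1 (proj 2 1) one_minus_one) = gact HZ 2 2 swap2 one_minus_one"
    by (rule ext) (simp only: HZ_simps sum_upto_2, auto simp: proj_def swap2_def one_minus_one_def)
next
  fix k :: nat and \<pi> assume "special_perm k \<pi>"
  then show "gact HZ (2 ^ k) (2 ^ k) \<pi> (sgvec k) = sgvec k" by (rule HZ_special_perm)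
next
  fix k i j l :: nat
  assume k: "1 \<le> k" and ijl: "1 \<le> i \<and> i < j \<and> j \<le> 2 ^ k \<and> (i \<in> Apos k \<longleftrightarrow> j \<notin> Apos k) \<and>
    1 \<le> l \<and> l \<le> 2 ^ k - 1"
  let ?N = "2 ^ k :: nat"
  have pj: "ptd_map ?N (?N - 1) (proj ?N j)" and pi: "ptd_map (?N - 1) (?N - 2) (proj (?N - 1) i)"
    and pd: "ptd_map (?N - 2) (?N - 1) (dinj (?N - 1) l)"
    using ptd_map_pair_maps[of i j ?N l] ijl by auto
  show "gact HZ ?N (?N - 1) (sfold ?N i j l) (sgvec k) = gact HZ (?N - 2) (?N - 1) (dinj (?N - 1) l)
      (gact HZ (?N - 1) (?N - 2) (proj (?N - 1) i) (gact HZ ?N (?N - 1) (proj ?N j) (sgvec k)))"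
    using HZ_opposite_pair[OF k] ijl HZ_comp[OF pj pi] HZ_comp[OF ptd_map_comp[OF pj pi] pd]
    by (simp only: comp_assoc)
qed

locale discrete_gr =
  fixes R :: "'a gring"
  assumes R: "discrete_gamma_ring R"
begin

lemma closed: "gring_closed R"
  using discrete_gamma_ring_closed[OF R] .

lemma act_car: "ptd_map n m f \<Longrightarrow> x \<in> gcar R n \<Longrightarrow> gact R n m f x \<in> gcar R m"
  using R unfolding discrete_gamma_ring_def by auto

lemma act_comp: "ptd_map n m f \<Longrightarrow> ptd_map m k g \<Longrightarrow> x \<in> gcar R n \<Longrightarrow>
    gact R n k (g \<circ> f) x = gact R m k g (gact R n m f x)"
  using R unfolding discrete_gamma_ring_def by auto

lemma act_id: "x \<in> gcar R n \<Longrightarrow> gact R n n (idp n) x = x"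
  using R unfolding discrete_gamma_ring_def by auto

lemma act_base: "ptd_map n m f \<Longrightarrow> gact R n m f (gbase R n) = gbase R m"
  using R unfolding discrete_gamma_ring_def by auto

lemma car_0: "gcar R 0 = {gbase R 0}"
  using R unfolding discrete_gamma_ring_def by auto

lemma mul_nat: "ptd_map n n' f \<Longrightarrow> ptd_map m m' g \<Longrightarrow> x \<in> gcar R n \<Longrightarrow> y \<in> gcar R m \<Longrightarrow>
    gmul R n' m' (gact R n n' f x) (gact R m m' g y)
      = gact R (n * m) (n' * m') (smash_map n n' f m g) (gmul R n m x y)"
  using R unfolding discrete_gamma_ring_def by auto

lemma mul_assoc: "x \<in> gcar R n \<Longrightarrow> y \<in> gcar R m \<Longrightarrow> z \<in> gcar R k \<Longrightarrow>
    gmul R (n * m) k (gmul R n m x y) z = gmul R n (m * k) x (gmul R m k y z)"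
  using R unfolding discrete_gamma_ring_def by auto

lemma mul_unit: "x \<in> gcar R n \<Longrightarrow> gmul R 1 n (gone R) x = x"
  and unit_mul: "x \<in> gcar R n \<Longrightarrow> gmul R n 1 x (gone R) = x"
  using R unfolding discrete_gamma_ring_def by auto

lemma gpow_add:
  assumes r: "r \<in> gcar R 2"
  shows "gmul R (2 ^ k) (2 ^ m) (gpow R r k) (gpow R r m) = gpow R r (k + m)"
proof (induction m)
  case 0
  then show ?case using unit_mul[OF gpow_car[OF closed r]] by simp
next
  case (Suc m)
  have "gmul R (2 ^ k) (2 ^ m * 2) (gpow R r k) (gmul R (2 ^ m) 2 (gpow R r m) r)
      = gmul R (2 ^ k * 2 ^ m) 2 (gmul R (2 ^ k) (2 ^ m) (gpow R r k) (gpow R r m)) r"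
    using mul_assoc[OF gpow_car[OF closed r] gpow_car[OF closed r] r] by simp
  also have "\<dots> = gmul R (2 ^ (k + m)) 2 (gpow R r (k + m)) r" using Suc by (simp add: power_add)
  finally show ?case by (simp add: mult.commute)
qed

lemma gpow_1: "r \<in> gcar R 2 \<Longrightarrow> gpow R r 1 = r"
  using mul_unit by simp

end

section \<open>Signed fibre sums\<close>

lemma card_fibre_0:
  fixes f g :: "'a \<Rightarrow> nat"
  assumes A: "finite A" and f: "\<forall>x\<in>A. f x \<le> n" and g: "\<forall>x\<in>A. g x \<le> n"
    and cards: "\<And>c. 1 \<le> c \<Longrightarrow> card {x\<in>A. f x = c} = card {x\<in>A. g x = c}"
  shows "card {x\<in>A. f x = 0} = card {x\<in>A. g x = 0}"
proof -
  have total: "card A = card {x\<in>A. h x = 0} + (\<Sum>c\<in>{1..n}. card {x\<in>A. h x = c})"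
    if "\<forall>x\<in>A. h x \<le> n" for h :: "'a \<Rightarrow> nat"
  proof -
    have "(\<Sum>c\<in>{0..n}. \<Sum>x\<in>{x\<in>A. h x = c}. (1::nat)) = (\<Sum>x\<in>A. 1)"
      by (rule sum.group) (use A that in auto)
    then have "card A = (\<Sum>c\<in>{0..n}. card {x\<in>A. h x = c})" by simp
    also have "{0..n} = insert 0 {1..n}" by auto
    finally show ?thesis by simp
  qed
  have "(\<Sum>c\<in>{1..n}. card {x\<in>A. f x = c}) = (\<Sum>c\<in>{1..n}. card {x\<in>A. g x = c})"
    using cards by (intro sum.cong) auto
  then show ?thesis using total[OF f] total[OF g] by linarith
qed

lemma fibrewise_bij:
  fixes f g :: "'a \<Rightarrow> nat"
  assumes A: "finite A" and f: "\<forall>x\<in>A. f x \<le> n" and g: "\<forall>x\<in>A. g x \<le> n"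
    and cards: "\<And>c. 1 \<le> c \<Longrightarrow> card {x\<in>A. f x = c} = card {x\<in>A. g x = c}"
  obtains \<pi> where "bij_betw \<pi> A A" and "\<forall>x\<in>A. f (\<pi> x) = g x"
proof -
  have "card {x\<in>A. g x = c} = card {x\<in>A. f x = c}" for c
    using cards[of c] card_fibre_0[OF A f g cards] by (cases "c = 0") simp_all
  then have "\<exists>\<beta>. bij_betw \<beta> {x\<in>A. g x = c} {x\<in>A. f x = c}" for c
    by (intro finite_same_card_bij) (use A in auto)
  then obtain \<beta> where \<beta>: "\<And>c. bij_betw (\<beta> c) {x\<in>A. g x = c} {x\<in>A. f x = c}" by metis
  define \<pi> where "\<pi> x = \<beta> (g x) x" for x
  have maps: "\<pi> x \<in> A \<and> f (\<pi> x) = g x" if "x \<in> A" for x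
    using \<beta>[of "g x"] that unfolding \<pi>_def bij_betw_def by auto
  have "inj_on \<pi> A"
  proof
    fix x y assume xy: "x \<in> A" "y \<in> A" "\<pi> x = \<pi> y"
    then have "g x = g y" using maps by metis
    then show "x = y" using xy \<beta>[of "g x"] unfolding bij_betw_def inj_on_def \<pi>_def by auto
  qed
  moreover have "A \<subseteq> \<pi> ` A"
  proof
    fix y assume "y \<in> A"
    then obtain x where x: "x \<in> A" "g x = f y" "y = \<beta> (f y) x"
      using \<beta>[of "f y"] unfolding bij_betw_def by auto
    then have "\<pi> x = y" unfolding \<pi>_def by simp
    then show "y \<in> \<pi> ` A" using x(1) by (metis imageI)
  qed
  ultimately have "bij_betw \<pi> A A" using maps unfolding bij_betw_def by blast
  then show ?thesis using that maps by blast
qed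

text \<open>The coefficient of \<open>c\<close> in \<open>f\<^sub>*(t\<^sup>k)\<close>, and the maps whose nonzero fibres carry only one sign.\<close>

definition fibre_sum :: "nat \<Rightarrow> (nat \<Rightarrow> nat) \<Rightarrow> nat \<Rightarrow> int" where
  "fibre_sum N f c = (\<Sum>i\<in>{i. 1 \<le> i \<and> i \<le> N \<and> f i = c}. sg i)"

definition sign_reduced :: "nat \<Rightarrow> (nat \<Rightarrow> nat) \<Rightarrow> bool" where
  "sign_reduced N f \<longleftrightarrow>
     (\<forall>i j. 1 \<le> i \<longrightarrow> i \<le> N \<longrightarrow> 1 \<le> j \<longrightarrow> j \<le> N \<longrightarrow> f i = f j \<longrightarrow> f i \<noteq> 0 \<longrightarrow> sg i = sg j)"

lemma HZ_gact_sgvec: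
  assumes "1 \<le> c" "c \<le> n"
  shows "gact HZ (2 ^ k) n f (sgvec k) c = fibre_sum (2 ^ k) f c"
  unfolding HZ_gact_at[OF assms] fibre_sum_def by (rule sum.cong) (auto simp: sgvec_def)

lemma fibre_sum_cancel:
  assumes "1 \<le> a" "a < b" "b \<le> N" "sg a + sg b = 0" "f a = f b" "c \<noteq> 0"
  shows "fibre_sum N (f(a := 0, b := 0)) c = fibre_sum N f c"
proof (cases "c = f a")
  case True
  let ?S = "{i. 1 \<le> i \<and> i \<le> N \<and> f i = c}"
  have S: "?S = insert a (insert b (?S - {a, b}))" using assms True by auto
  have "{i. 1 \<le> i \<and> i \<le> N \<and> (f(a := 0, b := 0)) i = c} = ?S - {a, b}" using assms by auto
  moreover have "fibre_sum N f c = sg a + (sg b + (\<Sum>i\<in>?S - {a, b}. sg i))"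
    unfolding fibre_sum_def by (subst S) (use assms in simp)
  ultimately show ?thesis unfolding fibre_sum_def using assms by simp
next
  case False
  then have "{i. 1 \<le> i \<and> i \<le> N \<and> (f(a := 0, b := 0)) i = c} = {i. 1 \<le> i \<and> i \<le> N \<and> f i = c}"
    using assms by auto
  then show ?thesis unfolding fibre_sum_def by simp
qed

lemma fibre_sum_mono:
  assumes f: "ptd_map N n f" and "N \<le> N'" and "c \<noteq> 0"
  shows "fibre_sum N' f c = fibre_sum N f c"
proof -
  have "f i \<noteq> c" if "N < i" for i using ptd_map_outside[OF f] that assms(3) by auto
  then have "{i. 1 \<le> i \<and> i \<le> N' \<and> f i = c} = {i. 1 \<le> i \<and> i \<le> N \<and> f i = c}"
    using assms(2) by (auto simp: not_le[symmetric])
  then show ?thesis unfolding fibre_sum_def by simp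
qed

lemma fibre_sum_beyond:
  assumes "ptd_map N n f" and "n < c" shows "fibre_sum N f c = 0"
proof -
  have E: "{i. 1 \<le> i \<and> i \<le> N \<and> f i = c} = {}" using assms unfolding ptd_map_def by fastforce
  show ?thesis unfolding fibre_sum_def E by simp
qed

text \<open>For a sign-reduced map all points of a nonzero fibre carry the same sign, so the signed
  fibre sum counts the points of each sign in that fibre.\<close>

lemma sign_reduced_fibre_card:
  assumes red: "sign_reduced N f" and c: "c \<noteq> 0" and s: "s = 1 \<or> s = -1"
  shows "card {x \<in> {i. 1 \<le> i \<and> i \<le> N \<and> sg i = s}. f x = c} = nat (s * fibre_sum N f c)"
proof -
  let ?F = "{i. 1 \<le> i \<and> i \<le> N \<and> f i = c}"
  have eqF: "{x \<in> {i. 1 \<le> i \<and> i \<le> N \<and> sg i = s}. f x = c} = {x \<in> ?F. sg x = s}" by auto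
  show ?thesis
  proof (cases "?F = {}")
    case True
    then have A: "{x \<in> ?F. sg x = s} = {}" by blast
    have "fibre_sum N f c = 0" unfolding fibre_sum_def True by simp
    then show ?thesis unfolding eqF A by simp
  next
    case False
    then obtain i0 where i0: "i0 \<in> ?F" by blast
    have same: "sg i = sg i0" if "i \<in> ?F" for i
      using red that i0 c unfolding sign_reduced_def by (metis (mono_tags) mem_Collect_eq)
    then have "fibre_sum N f c = of_nat (card ?F) * sg i0" unfolding fibre_sum_def by simp
    then have sum: "s * fibre_sum N f c = of_nat (card ?F) * (s * sg i0)" by (simp only: mult.left_commute)
    show ?thesis
    proof (cases "sg i0 = s")
      case True
      then have A: "{x \<in> ?F. sg x = s} = ?F" using same by auto
      have "s * sg i0 = 1" using True s by auto
      then show ?thesis unfolding eqF sum A by simp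
    next
      case False
      then have A: "{x \<in> ?F. sg x = s} = {}" using same by auto
      have "s * sg i0 = -1" using s sg_cases[of i0] False by auto
      then show ?thesis unfolding eqF sum A by simp
    qed
  qed
qed

lemma Apos_sg: "Apos k = {i. 1 \<le> i \<and> i \<le> 2 ^ k \<and> sg i = 1}"
  unfolding Apos_def sg_def by auto

lemma special_perm_glue:
  fixes k :: nat
  defines "P \<equiv> Apos k" and "M \<equiv> {1..2 ^ k} - Apos k"
  assumes bP: "bij_betw \<pi>P P P" and bM: "bij_betw \<pi>M M M"
  shows "special_perm k (\<lambda>x. if x \<in> P then \<pi>P x else if x \<in> M then \<pi>M x else 0)"
proof -
  define \<pi> where "\<pi> = (\<lambda>x. if x \<in> P then \<pi>P x else if x \<in> M then \<pi>M x else 0)"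
  have PM: "{1..2 ^ k} = P \<union> M" "P \<inter> M = {}" unfolding P_def M_def Apos_def by auto
  have bP': "bij_betw \<pi> P P" using bP by (rule bij_betw_cong[THEN iffD1, rotated]) (simp add: \<pi>_def)
  have bM': "bij_betw \<pi> M M"
    using bM by (rule bij_betw_cong[THEN iffD1, rotated]) (use PM in \<open>auto simp: \<pi>_def\<close>)
  have bij: "bij_betw \<pi> {1..2 ^ k} {1..2 ^ k}"
    unfolding PM(1) by (rule bij_betw_combine[OF bP' bM' PM(2)])
  have out: "\<pi> x = 0" if "x \<notin> {1..2 ^ k}" for x using that PM(1) by (auto simp: \<pi>_def)
  have "\<pi> x \<le> 2 ^ k" for x
    using bij_betw_apply[OF bij, of x] out[of x] by (cases "x \<in> {1..2 ^ k}") auto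
  then have "ptd_map (2 ^ k) (2 ^ k) \<pi>" unfolding ptd_map_def using out by auto
  moreover have "\<forall>i\<in>{1..2 ^ k}. \<pi> i \<in> Apos k \<longleftrightarrow> i \<in> Apos k"
    using bij_betw_imp_surj_on[OF bP'] bij_betw_imp_surj_on[OF bM'] PM unfolding P_def by blast
  ultimately have "special_perm k \<pi>" unfolding special_perm_def using bij by blast
  then show ?thesis unfolding \<pi>_def .
qed

lemma not_sign_reduced:
  assumes "\<not> sign_reduced (2 ^ k) f"
  obtains a b where "1 \<le> a" "a < b" "b \<le> 2 ^ k" "f a = f b" "f a \<noteq> 0" "sg a + sg b = 0"
    "a \<in> Apos k \<longleftrightarrow> b \<notin> Apos k"
proof -
  obtain i j where ij: "1 \<le> i" "i \<le> 2 ^ k" "1 \<le> j" "j \<le> 2 ^ k" "f i = f j" "f i \<noteq> 0" "sg i \<noteq> sg j"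
    using assms unfolding sign_reduced_def by blast
  have opp: "sg i + sg j = 0" "i \<in> Apos k \<longleftrightarrow> j \<notin> Apos k"
    using ij sg_cases[of i] sg_cases[of j] sg_Apos[of i k] sg_Apos[of j k] by (auto split: if_splits)
  show ?thesis
  proof (cases "i < j")
    case True then show ?thesis using that ij opp by blast
  next
    case False
    then have "j < i" using ij by (metis linorder_neqE_nat)
    then show ?thesis using that[of j i] ij opp by (auto simp: add.commute)
  qed
qed

section \<open>Well-definedness of the evaluation at a formal difference law\<close>

locale discrete_fdl = discrete_gr +
  fixes r assumes F: "formal_difference_law R r"
begin

lemma r_car: "r \<in> gcar R 2"
  using fdl_car[OF F] .

lemma pow_car: "gpow R r k \<in> gcar R (2 ^ k)"
  using gpow_car[OF closed r_car] .

text \<open>Folding an opposite-sign pair of points together has the same effect on \<open>r\<^sup>k\<close> as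
  sending both of them to the base point (axiom (4)).\<close>

lemma cancel_pair:
  assumes k: "1 \<le> k" and f: "ptd_map (2 ^ k) n f"
    and ab: "1 \<le> a" "a < b" "b \<le> 2 ^ k" and opp: "a \<in> Apos k \<longleftrightarrow> b \<notin> Apos k" and eq: "f a = f b"
  shows "gact R (2 ^ k) n f (gpow R r k) = gact R (2 ^ k) n (f(a := 0, b := 0)) (gpow R r k)"
proof -
  let ?N = "2 ^ k :: nat" and ?X = "gpow R r k"
  let ?s = "sfold ?N a b 1" and ?d = "dinj (?N - 1) 1" and ?pa = "proj (?N - 1) a" and ?pb = "proj ?N b"
  obtain f' where f': "ptd_map (?N - 1) n f'" and fs: "f' \<circ> ?s = f" and fd: "f' \<circ> (?d \<circ> ?pa \<circ> ?pb) = f(a := 0, b := 0)"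
    using factor_through_fold[OF f ab eq] .
  have pb: "ptd_map ?N (?N - 1) ?pb" and pa: "ptd_map (?N - 1) (?N - 2) ?pa" and d: "ptd_map (?N - 2) (?N - 1) ?d"
    using ptd_map_pair_maps[of a b ?N 1] ab by auto
  have s: "ptd_map ?N (?N - 1) ?s" using ab by (intro ptd_map_sfold) auto
  have X1: "gact R ?N (?N - 1) ?pb ?X \<in> gcar R (?N - 1)" using act_car[OF pb pow_car] .
  have fold: "gact R ?N (?N - 1) ?s ?X = gact R ?N (?N - 1) (?d \<circ> ?pa \<circ> ?pb) ?X"
    using fdl_pair[OF F k ab opp, of 1] ab act_comp[OF pb pa pow_car] act_comp[OF ptd_map_comp[OF pb pa] d pow_car]
    by (simp add: comp_assoc)
  have dpp: "ptd_map ?N (?N - 1) (?d \<circ> ?pa \<circ> ?pb)"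
    using ptd_map_comp[OF ptd_map_comp[OF pb pa] d] by (simp add: comp_assoc)
  have "gact R ?N n f ?X = gact R (?N - 1) n f' (gact R ?N (?N - 1) ?s ?X)"
    using act_comp[OF s f' pow_car] fs by simp
  also have "\<dots> = gact R ?N n (f' \<circ> (?d \<circ> ?pa \<circ> ?pb)) ?X"
    unfolding fold using act_comp[OF dpp f' pow_car] by simp
  finally show ?thesis using fd by simp
qed

text \<open>Cancelling one opposite pair shrinks the support without changing the value on \<open>r\<^sup>k\<close>
  or the signed fibre sums; repeating this reaches a sign-reduced map.\<close>

lemma cancel_step:
  assumes k: "1 \<le> k" and f: "ptd_map (2 ^ k) n f" and "\<not> sign_reduced (2 ^ k) f"
  obtains f' where "ptd_map (2 ^ k) n f'"
    "card {i. 1 \<le> i \<and> i \<le> 2 ^ k \<and> f' i \<noteq> 0} < card {i. 1 \<le> i \<and> i \<le> 2 ^ k \<and> f i \<noteq> 0}"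
    "gact R (2 ^ k) n f' (gpow R r k) = gact R (2 ^ k) n f (gpow R r k)"
    "\<And>c. c \<noteq> 0 \<Longrightarrow> fibre_sum (2 ^ k) f' c = fibre_sum (2 ^ k) f c"
proof -
  obtain a b where ab: "1 \<le> a" "a < b" "b \<le> 2 ^ k" "f a = f b" "f a \<noteq> 0"
    "sg a + sg b = 0" "a \<in> Apos k \<longleftrightarrow> b \<notin> Apos k"
    using not_sign_reduced[OF assms(3)] by blast
  define f' where "f' = f(a := 0, b := 0)"
  have "{i. 1 \<le> i \<and> i \<le> 2 ^ k \<and> f' i \<noteq> 0} \<subseteq> {i. 1 \<le> i \<and> i \<le> 2 ^ k \<and> f i \<noteq> 0}"
    and "a \<in> {i. 1 \<le> i \<and> i \<le> 2 ^ k \<and> f i \<noteq> 0} - {i. 1 \<le> i \<and> i \<le> 2 ^ k \<and> f' i \<noteq> 0}"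
    using ab unfolding f'_def by auto
  then have "{i. 1 \<le> i \<and> i \<le> 2 ^ k \<and> f' i \<noteq> 0} \<subset> {i. 1 \<le> i \<and> i \<le> 2 ^ k \<and> f i \<noteq> 0}"
    by blast
  then have "card {i. 1 \<le> i \<and> i \<le> 2 ^ k \<and> f' i \<noteq> 0} < card {i. 1 \<le> i \<and> i \<le> 2 ^ k \<and> f i \<noteq> 0}"
    by (rule psubset_card_mono[rotated]) simp
  moreover have "ptd_map (2 ^ k) n f'" unfolding f'_def by (intro ptd_map_upd_0 f)
  moreover have "gact R (2 ^ k) n f' (gpow R r k) = gact R (2 ^ k) n f (gpow R r k)"
    unfolding f'_def using cancel_pair[OF k f ab(1-3,7,4)] by simp
  moreover have "fibre_sum (2 ^ k) f' c = fibre_sum (2 ^ k) f c" if "c \<noteq> 0" for c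
    unfolding f'_def using fibre_sum_cancel[OF ab(1-3,6,4) that] .
  ultimately show ?thesis using that by blast
qed

lemma sign_reduce:
  assumes k: "1 \<le> k" and f: "ptd_map (2 ^ k) n f"
  obtains g where "ptd_map (2 ^ k) n g" "sign_reduced (2 ^ k) g"
    "gact R (2 ^ k) n g (gpow R r k) = gact R (2 ^ k) n f (gpow R r k)"
    "\<And>c. c \<noteq> 0 \<Longrightarrow> fibre_sum (2 ^ k) g c = fibre_sum (2 ^ k) f c"
  using f
proof (induction "card {i. 1 \<le> i \<and> i \<le> 2 ^ k \<and> f i \<noteq> 0}" arbitrary: f rule: less_induct)
  case less
  show ?case
  proof (cases "sign_reduced (2 ^ k) f")
    case True
    show ?thesis by (rule less.prems(1)[OF less.prems(2) True]) simp_all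
  next
    case False
    obtain f' where f': "ptd_map (2 ^ k) n f'"
      and fewer: "card {i. 1 \<le> i \<and> i \<le> 2 ^ k \<and> f' i \<noteq> 0} < card {i. 1 \<le> i \<and> i \<le> 2 ^ k \<and> f i \<noteq> 0}"
      and val: "gact R (2 ^ k) n f' (gpow R r k) = gact R (2 ^ k) n f (gpow R r k)"
      and sums: "\<And>c. c \<noteq> 0 \<Longrightarrow> fibre_sum (2 ^ k) f' c = fibre_sum (2 ^ k) f c"
      using cancel_step[OF k less.prems(2) False] by blast
    show ?thesis
    proof (rule less.hyps[OF fewer _ f'])
      fix g assume g: "ptd_map (2 ^ k) n g" "sign_reduced (2 ^ k) g"
        "gact R (2 ^ k) n g (gpow R r k) = gact R (2 ^ k) n f' (gpow R r k)"
        "\<And>c. c \<noteq> 0 \<Longrightarrow> fibre_sum (2 ^ k) g c = fibre_sum (2 ^ k) f' c"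
      show ?thesis by (rule less.prems(1)[OF g(1,2)]) (simp_all add: g(3,4) val sums)
    qed
  qed
qed

text \<open>Two sign-reduced maps with the same signed fibre sums differ by a special permutation,
  which fixes \<open>r\<^sup>k\<close> (axiom (3)).\<close>

lemma sign_reduced_agree:
  assumes k: "1 \<le> k" and f: "ptd_map (2 ^ k) n f" and g: "ptd_map (2 ^ k) n g"
    and rf: "sign_reduced (2 ^ k) f" and rg: "sign_reduced (2 ^ k) g"
    and sums: "\<And>c. c \<noteq> 0 \<Longrightarrow> fibre_sum (2 ^ k) f c = fibre_sum (2 ^ k) g c"
  shows "gact R (2 ^ k) n f (gpow R r k) = gact R (2 ^ k) n g (gpow R r k)"
proof -
  define P M where "P = Apos k" and "M = {1..2 ^ k} - Apos k"
  have P: "P = {i. 1 \<le> i \<and> i \<le> 2 ^ k \<and> sg i = 1}" and M: "M = {i. 1 \<le> i \<and> i \<le> 2 ^ k \<and> sg i = -1}"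
    unfolding P_def M_def Apos_sg using sg_cases by auto
  have cards: "card {x \<in> S. f x = c} = card {x \<in> S. g x = c}"
    if "S = {i. 1 \<le> i \<and> i \<le> 2 ^ k \<and> sg i = s}" "s = 1 \<or> s = -1" "1 \<le> c" for S s c
    using that sign_reduced_fibre_card[OF rf, of c s] sign_reduced_fibre_card[OF rg, of c s] sums[of c] by simp
  obtain \<pi>P where \<pi>P: "bij_betw \<pi>P P P" "\<forall>x\<in>P. f (\<pi>P x) = g x"
    using fibrewise_bij[of P f n g] cards[OF P] ptd_map_le[OF f] ptd_map_le[OF g] by (auto simp: P)
  obtain \<pi>M where \<pi>M: "bij_betw \<pi>M M M" "\<forall>x\<in>M. f (\<pi>M x) = g x"
    using fibrewise_bij[of M f n g] cards[OF M] ptd_map_le[OF f] ptd_map_le[OF g] by (auto simp: M)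
  define \<pi> where "\<pi> = (\<lambda>x. if x \<in> P then \<pi>P x else if x \<in> M then \<pi>M x else 0)"
  have sp: "special_perm k \<pi>"
    unfolding \<pi>_def P_def M_def by (rule special_perm_glue[OF \<pi>P(1)[unfolded P_def] \<pi>M(1)[unfolded M_def]])
  have "g = f \<circ> \<pi>"
  proof
    fix x
    show "g x = (f \<circ> \<pi>) x"
    proof (cases "x \<in> P \<union> M")
      case True then show ?thesis using \<pi>P(2) \<pi>M(2) unfolding \<pi>_def by auto
    next
      case False
      then have "x = 0 \<or> 2 ^ k < x" unfolding P_def M_def by auto
      then show ?thesis using False ptd_map_outside[OF g] ptd_map_outside[OF f, of 0] unfolding \<pi>_def by auto
    qed
  qed
  then have "gact R (2 ^ k) n g (gpow R r k) = gact R (2 ^ k) n f (gact R (2 ^ k) (2 ^ k) \<pi> (gpow R r k))"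
    using act_comp[OF _ f pow_car] sp unfolding special_perm_def by blast
  then show ?thesis using fdl_special[OF F k sp] by simp
qed

lemma fibre_sums_determine:
  assumes k: "1 \<le> k" and f: "ptd_map (2 ^ k) n f" and g: "ptd_map (2 ^ k) n g"
    and sums: "\<And>c. c \<noteq> 0 \<Longrightarrow> fibre_sum (2 ^ k) f c = fibre_sum (2 ^ k) g c"
  shows "gact R (2 ^ k) n f (gpow R r k) = gact R (2 ^ k) n g (gpow R r k)"
proof -
  obtain f1 where f1: "ptd_map (2 ^ k) n f1" "sign_reduced (2 ^ k) f1"
    "gact R (2 ^ k) n f1 (gpow R r k) = gact R (2 ^ k) n f (gpow R r k)"
    "\<And>c. c \<noteq> 0 \<Longrightarrow> fibre_sum (2 ^ k) f1 c = fibre_sum (2 ^ k) f c"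
    using sign_reduce[OF k f] by blast
  obtain g1 where g1: "ptd_map (2 ^ k) n g1" "sign_reduced (2 ^ k) g1"
    "gact R (2 ^ k) n g1 (gpow R r k) = gact R (2 ^ k) n g (gpow R r k)"
    "\<And>c. c \<noteq> 0 \<Longrightarrow> fibre_sum (2 ^ k) g1 c = fibre_sum (2 ^ k) g c"
    using sign_reduce[OF k g] by blast
  have "gact R (2 ^ k) n f1 (gpow R r k) = gact R (2 ^ k) n g1 (gpow R r k)"
    using sign_reduced_agree[OF k f1(1) g1(1) f1(2) g1(2)] f1(4) g1(4) sums by simp
  then show ?thesis using f1(3) g1(3) by simp
qed

text \<open>Since \<open>p\<^sup>2\<^sub>2 r = 1\<close> (axiom (1)), a map defined at level \<open>k\<close> has the same value on
  \<open>r\<^sup>m\<close> for all \<open>m \<ge> k\<close>.\<close>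

lemma gpow_lift:
  assumes f: "ptd_map (2 ^ k) n f" and "k \<le> m"
  shows "gact R (2 ^ m) n f (gpow R r m) = gact R (2 ^ k) n f (gpow R r k)"
  using \<open>k \<le> m\<close>
proof (induction m rule: dec_induct)
  case (step m)
  have fm: "ptd_map (2 ^ m) n f" using ptd_map_mono[OF f] step(1) by simp
  have p22: "ptd_map 2 1 (proj 2 2)" using ptd_map_proj[of 2 2] by simp
  have "gact R (2 ^ m) n f (gpow R r m)
      = gmul R n 1 (gact R (2 ^ m) n f (gpow R r m)) (gact R 2 1 (proj 2 2) r)"
    unfolding fdl_unit[OF F] using unit_mul[OF act_car[OF fm pow_car]] by simp
  also have "\<dots> = gact R (2 ^ Suc m) n f (gpow R r (Suc m))"
    using mul_nat[OF fm p22 pow_car r_car] smash_proj22[OF fm] by (simp add: mult.commute)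
  finally show ?case using step(3) by simp
qed simp

end

section \<open>Elements of HZ as images of powers of t\<close>

definition represents :: "nat \<Rightarrow> (nat \<Rightarrow> int) \<Rightarrow> nat \<Rightarrow> (nat \<Rightarrow> nat) \<Rightarrow> bool" where
  "represents n a k f \<longleftrightarrow> 1 \<le> k \<and> ptd_map (2 ^ k) n f \<and> gact HZ (2 ^ k) n f (sgvec k) = a"

lemma represents_car: "represents n a k f \<Longrightarrow> a \<in> gcar HZ n"
  unfolding represents_def by auto

lemma represents_fibre_sum: "represents n a k f \<Longrightarrow> 1 \<le> c \<Longrightarrow> c \<le> n \<Longrightarrow> fibre_sum (2 ^ k) f c = a c"
  unfolding represents_def using HZ_gact_sgvec by auto

context discrete_fdl
begin

lemma represents_agree:
  assumes rf: "represents n a k f" and rg: "represents n a m g"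
  shows "gact R (2 ^ k) n f (gpow R r k) = gact R (2 ^ m) n g (gpow R r m)"
proof -
  define K where "K = max k m"
  have f: "ptd_map (2 ^ k) n f" and g: "ptd_map (2 ^ m) n g" and k: "1 \<le> k"
    using rf rg unfolding represents_def by auto
  have kK: "k \<le> K" "m \<le> K" unfolding K_def by auto
  then have fK: "ptd_map (2 ^ K) n f" and gK: "ptd_map (2 ^ K) n g"
    using ptd_map_mono[OF f] ptd_map_mono[OF g] by simp_all
  have "fibre_sum (2 ^ K) f c = fibre_sum (2 ^ K) g c" if c: "c \<noteq> 0" for c
  proof (cases "c \<le> n")
    case True
    then show ?thesis using fibre_sum_mono[OF f _ c] fibre_sum_mono[OF g _ c] kK
      represents_fibre_sum[OF rf _ True] represents_fibre_sum[OF rg _ True] c by simp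
  next
    case False
    then show ?thesis using fibre_sum_beyond[OF fK] fibre_sum_beyond[OF gK] by simp
  qed
  then have "gact R (2 ^ K) n f (gpow R r K) = gact R (2 ^ K) n g (gpow R r K)"
    using fibre_sums_determine[OF _ fK gK] k kK by simp
  then show ?thesis using gpow_lift[OF f kK(1)] gpow_lift[OF g kK(2)] by simp
qed

end

lemma fibre_sum_add_point:
  assumes k: "1 \<le> k" and f: "ptd_map (2 ^ k) n f" and c0: "1 \<le> c0" "c0 \<le> n" and \<delta>: "\<delta> = 1 \<or> \<delta> = -1"
  obtains f' where "ptd_map (2 ^ Suc k) n f'"
    and "\<And>c. c \<noteq> 0 \<Longrightarrow> fibre_sum (2 ^ Suc k) f' c = fibre_sum (2 ^ k) f c + (if c = c0 then \<delta> else 0)"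
proof
  define i0 :: nat where "i0 = (if \<delta> = 1 then 2 ^ k + 2 else 2 ^ k + 1)"
  have "(2::nat) \<le> 2 ^ k" using k by (metis one_le_numeral power_increasing power_one_right)
  then have i0: "2 ^ k < i0" "i0 \<le> 2 ^ Suc k" unfolding i0_def by auto
  have sg_i0: "sg i0 = \<delta>" unfolding i0_def using sg_pow2_plus[OF k] \<delta> by auto
  show "ptd_map (2 ^ Suc k) n (f(i0 := c0))"
    using ptd_map_mono[OF f, of "2 ^ Suc k"] i0 c0 unfolding ptd_map_def by auto
  fix c :: nat assume "c \<noteq> 0"
  let ?A = "{i. 1 \<le> i \<and> i \<le> 2 ^ k \<and> f i = c}"
  have small: "i \<le> 2 ^ k" if "f i = c" for i
    using ptd_map_outside[OF f, of i] that \<open>c \<noteq> 0\<close> by (cases "2 ^ k < i") auto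
  have E: "{i. 1 \<le> i \<and> i \<le> 2 ^ Suc k \<and> (f(i0 := c0)) i = c} = (if c = c0 then insert i0 ?A else ?A)"
    using i0 small by (auto intro: le_trans[of _ "2 ^ k"])
  have "i0 \<notin> ?A" using i0 by auto
  then have "sum sg (insert i0 ?A) = sg i0 + sum sg ?A" by (intro sum.insert) simp_all
  then show "fibre_sum (2 ^ Suc k) (f(i0 := c0)) c = fibre_sum (2 ^ k) f c + (if c = c0 then \<delta> else 0)"
    unfolding fibre_sum_def E using sg_i0 by (cases "c = c0") simp_all
qed

text \<open>Every element of \<open>HZ[n]\<close> has the form \<open>f\<^sub>*(t\<^sup>k)\<close>: induction on \<open>\<Sum>\<^sub>c |a c|\<close>, which drops
  by one when one coefficient is moved one step towards \<open>0\<close>; each step is undone by adding one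
  signed point.\<close>

lemma HZ_norm_step:
  assumes a: "a \<in> gcar HZ n" and norm: "(\<Sum>c\<in>{1..n}. nat \<bar>a c\<bar>) = Suc s"
  obtains c0 \<delta> where "1 \<le> c0" "c0 \<le> n" "\<delta> = 1 \<or> \<delta> = -1"
    "a(c0 := a c0 - \<delta>) \<in> gcar HZ n" "(\<Sum>c\<in>{1..n}. nat \<bar>(a(c0 := a c0 - \<delta>)) c\<bar>) = s"
proof -
  have "\<exists>c0\<in>{1..n}. a c0 \<noteq> 0"
  proof (rule ccontr)
    assume "\<not> (\<exists>c0\<in>{1..n}. a c0 \<noteq> 0)"
    then have "(\<Sum>c\<in>{1..n}. nat \<bar>a c\<bar>) = 0" by simp
    then show False using norm by simp
  qed
  then obtain c0 where c0: "c0 \<in> {1..n}" "a c0 \<noteq> 0" by blast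
  define \<delta> :: int where "\<delta> = (if a c0 > 0 then 1 else -1)"
  define a' where "a' = a(c0 := a c0 - \<delta>)"
  have "nat \<bar>a' c0\<bar> + 1 = nat \<bar>a c0\<bar>" using c0(2) unfolding a'_def \<delta>_def by auto
  moreover have "(\<Sum>c\<in>{1..n}. nat \<bar>b c\<bar>) = nat \<bar>b c0\<bar> + (\<Sum>c\<in>{1..n} - {c0}. nat \<bar>b c\<bar>)" for b :: "nat \<Rightarrow> int"
    using c0 by (simp add: sum.remove)
  moreover have "(\<Sum>c\<in>{1..n} - {c0}. nat \<bar>a' c\<bar>) = (\<Sum>c\<in>{1..n} - {c0}. nat \<bar>a c\<bar>)"
    unfolding a'_def by (rule sum.cong) auto
  ultimately have "(\<Sum>c\<in>{1..n}. nat \<bar>a' c\<bar>) = s" using norm by simp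
  moreover have "a' \<in> gcar HZ n" using a c0 unfolding a'_def by auto
  moreover have "1 \<le> c0" "c0 \<le> n" "\<delta> = 1 \<or> \<delta> = -1" using c0 unfolding \<delta>_def by auto
  ultimately show ?thesis using that unfolding a'_def by blast
qed

lemma fibre_sums_exist:
  assumes "a \<in> gcar HZ n"
  shows "\<exists>k f. 1 \<le> k \<and> ptd_map (2 ^ k) n f \<and> (\<forall>c. 1 \<le> c \<longrightarrow> c \<le> n \<longrightarrow> fibre_sum (2 ^ k) f c = a c)"
proof -
  have "\<forall>a. a \<in> gcar HZ n \<longrightarrow> (\<Sum>c\<in>{1..n}. nat \<bar>a c\<bar>) = s \<longrightarrow>
     (\<exists>k f. 1 \<le> k \<and> ptd_map (2 ^ k) n f \<and> (\<forall>c. 1 \<le> c \<longrightarrow> c \<le> n \<longrightarrow> fibre_sum (2 ^ k) f c = a c))" for s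
  proof (induction s)
    case 0
    have "ptd_map (2 ^ 1) n (\<lambda>_. 0)" unfolding ptd_map_def by simp
    moreover have "fibre_sum (2 ^ 1) (\<lambda>_. 0) c = 0" if "1 \<le> c" for c
      using that unfolding fibre_sum_def by simp
    ultimately show ?case by force
  next
    case (Suc s)
    show ?case
    proof (intro allI impI)
      fix a :: "nat \<Rightarrow> int" assume "a \<in> gcar HZ n" and "(\<Sum>c\<in>{1..n}. nat \<bar>a c\<bar>) = Suc s"
      then obtain c0 \<delta> where c0: "1 \<le> c0" "c0 \<le> n" and \<delta>: "\<delta> = 1 \<or> \<delta> = -1"
        and smaller: "a(c0 := a c0 - \<delta>) \<in> gcar HZ n" "(\<Sum>c\<in>{1..n}. nat \<bar>(a(c0 := a c0 - \<delta>)) c\<bar>) = s"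
        by (rule HZ_norm_step)
      then obtain k f where k: "1 \<le> k" and f: "ptd_map (2 ^ k) n f"
        and sums: "\<forall>c. 1 \<le> c \<longrightarrow> c \<le> n \<longrightarrow> fibre_sum (2 ^ k) f c = (a(c0 := a c0 - \<delta>)) c"
        using Suc.IH by blast
      obtain f' where f': "ptd_map (2 ^ Suc k) n f'"
        and sums': "\<And>c. c \<noteq> 0 \<Longrightarrow> fibre_sum (2 ^ Suc k) f' c = fibre_sum (2 ^ k) f c + (if c = c0 then \<delta> else 0)"
        using fibre_sum_add_point[OF k f c0 \<delta>] by blast
      have "fibre_sum (2 ^ Suc k) f' c = a c" if "1 \<le> c" "c \<le> n" for c
        using sums' sums that by auto
      then show "\<exists>k f. 1 \<le> k \<and> ptd_map (2 ^ k) n f \<and> (\<forall>c. 1 \<le> c \<longrightarrow> c \<le> n \<longrightarrow> fibre_sum (2 ^ k) f c = a c)"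
        using f' by (intro exI[of _ "Suc k"] exI[of _ f']) simp
    qed
  qed
  then show ?thesis using assms by blast
qed

lemma represents_exists:
  assumes a: "a \<in> gcar HZ n" obtains k f where "represents n a k f"
proof -
  obtain k f where k: "1 \<le> k" and f: "ptd_map (2 ^ k) n f"
    and sums: "\<forall>c. 1 \<le> c \<longrightarrow> c \<le> n \<longrightarrow> fibre_sum (2 ^ k) f c = a c"
    using fibre_sums_exist[OF a] by blast
  have "gact HZ (2 ^ k) n f (sgvec k) = a"
  proof
    fix c
    show "gact HZ (2 ^ k) n f (sgvec k) c = a c"
      using HZ_gact_sgvec[of c n k f] sums a by (cases "c = 0 \<or> n < c") auto
  qed
  then show ?thesis using that k f unfolding represents_def by blast
qed

lemma represents_base: "represents n (gbase HZ n) 1 (\<lambda>_. 0)"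
  unfolding represents_def ptd_map_def by (simp add: fun_eq_iff)

lemma represents_one: "represents 1 (gone HZ) 1 (proj 2 2)"
  using fdl_unit[OF HZ_fdl] ptd_map_proj[of 2 2] unfolding represents_def sgvec_1 by simp

lemma represents_one_minus_one: "represents 2 one_minus_one 1 (idp 2)"
proof -
  have "gact HZ 2 2 (idp 2) one_minus_one = one_minus_one"
    by (rule ext) (simp only: HZ_simps sum_upto_2, auto simp: idp_def one_minus_one_def)
  then show ?thesis using ptd_map_idp[of 2] unfolding represents_def sgvec_1 by simp
qed

lemma represents_act:
  "represents n a k f \<Longrightarrow> ptd_map n m g \<Longrightarrow> represents m (gact HZ n m g a) k (g \<circ> f)"
  unfolding represents_def using HZ_comp ptd_map_comp by metis

lemma represents_mul:
  assumes "represents n a k f" and "represents m b l g"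
  shows "represents (n * m) (gmul HZ n m a b) (k + l) (smash_map (2 ^ k) n f (2 ^ l) g)"
proof -
  have f: "ptd_map (2 ^ k) n f" and g: "ptd_map (2 ^ l) m g" and k: "1 \<le> k"
    using assms unfolding represents_def by auto
  have "gact HZ (2 ^ (k + l)) (n * m) (smash_map (2 ^ k) n f (2 ^ l) g) (sgvec (k + l)) = gmul HZ n m a b"
    using HZ_nat[OF f g, of "sgvec k" "sgvec l"] sgvec_mul[of k l] assms
    unfolding represents_def by (simp add: power_add del: HZ_simps)
  then show ?thesis using k smash_ptd[OF f g] unfolding represents_def by (simp add: power_add)
qed

lemma mult_map_represented:
  assumes \<chi>: "mult_map HZ R \<chi>" and rep: "represents n a k f"
  shows "\<chi> n a = gact R (2 ^ k) n f (gpow R (\<chi> 2 one_minus_one) k)"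
proof -
  have f: "ptd_map (2 ^ k) n f" and a: "gact HZ (2 ^ k) n f (gpow HZ one_minus_one k) = a"
    using rep unfolding represents_def HZ_gpow_one_minus_one by auto
  have "\<chi> n a = gact R (2 ^ k) n f (\<chi> (2 ^ k) (gpow HZ one_minus_one k))"
    using mult_mapD(3)[OF \<chi> f gpow_car[OF HZ_closed one_minus_one_car]] a by simp
  then show ?thesis using mult_map_gpow[OF \<chi> HZ_closed one_minus_one_car] by simp
qed

lemma mult_maps_eqI:
  assumes \<phi>: "\<phi> \<in> mult_maps HZ R" and \<psi>: "\<psi> \<in> mult_maps HZ R"
    and eq: "\<phi> 2 one_minus_one = \<psi> 2 one_minus_one"
  shows "\<phi> = \<psi>"
proof (intro ext)
  fix n x
  show "\<phi> n x = \<psi> n x"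
  proof (cases "x \<in> gcar HZ n")
    case True
    then obtain k f where "represents n x k f" by (rule represents_exists)
    then show ?thesis
      using mult_map_represented[of R \<phi>] mult_map_represented[of R \<psi>] \<phi> \<psi> eq unfolding mult_maps_def by auto
  next
    case False
    then show ?thesis using \<phi> \<psi> unfolding mult_maps_def by auto
  qed
qed

definition fdl_map :: "'a gring \<Rightarrow> 'a \<Rightarrow> nat \<Rightarrow> (nat \<Rightarrow> int) \<Rightarrow> 'a" where
  "fdl_map R r n a = (if a \<in> gcar HZ n then
      (let p = (SOME p. represents n a (fst p) (snd p)) in gact R (2 ^ fst p) n (snd p) (gpow R r (fst p)))
     else undefined)"

context discrete_fdl
begin

lemma fdl_map_eq:
  assumes rep: "represents n a k f"
  shows "fdl_map R r n a = gact R (2 ^ k) n f (gpow R r k)"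
proof -
  let ?p = "SOME p. represents n a (fst p) (snd p)"
  have "represents n a (fst ?p) (snd ?p)" by (rule someI[of _ "(k, f)"]) (simp add: rep)
  then have "gact R (2 ^ fst ?p) n (snd ?p) (gpow R r (fst ?p)) = gact R (2 ^ k) n f (gpow R r k)"
    using rep by (rule represents_agree)
  then show ?thesis using represents_car[OF rep] unfolding fdl_map_def Let_def by (simp del: HZ_simps)
qed

lemma fdl_map_car:
  assumes "a \<in> gcar HZ n" shows "fdl_map R r n a \<in> gcar R n"
proof -
  obtain k f where rep: "represents n a k f" using represents_exists[OF assms] .
  then have "ptd_map (2 ^ k) n f" unfolding represents_def by simp
  then show ?thesis unfolding fdl_map_eq[OF rep] by (rule act_car[OF _ pow_car])
qed

lemma fdl_map_base: "fdl_map R r n (gbase HZ n) = gbase R n"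
proof -
  have z2: "ptd_map 2 0 (\<lambda>_. 0)" and zn: "ptd_map 0 n (\<lambda>_. 0)" unfolding ptd_map_def by auto
  have "fdl_map R r n (gbase HZ n) = gact R 2 n ((\<lambda>_::nat. 0::nat) \<circ> (\<lambda>_::nat. 0::nat)) (gpow R r 1)"
    using fdl_map_eq[OF represents_base] by (simp add: comp_def)
  also have "\<dots> = gact R 0 n (\<lambda>_. 0) (gact R 2 0 (\<lambda>_. 0) (gpow R r 1))"
    using act_comp[OF z2 zn] pow_car[of 1] by simp
  also have "gact R 2 0 (\<lambda>_. 0) (gpow R r 1) = gbase R 0"
    using act_car[OF z2, of "gpow R r 1"] pow_car[of 1] car_0 by auto
  finally show ?thesis using act_base[OF zn] by simp
qed

lemma fdl_map_act:
  assumes g: "ptd_map n m g" and a: "a \<in> gcar HZ n"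
  shows "fdl_map R r m (gact HZ n m g a) = gact R n m g (fdl_map R r n a)"
proof -
  obtain k f where rep: "represents n a k f" using represents_exists[OF a] .
  then have f: "ptd_map (2 ^ k) n f" unfolding represents_def by simp
  show ?thesis using fdl_map_eq[OF represents_act[OF rep g]] fdl_map_eq[OF rep] act_comp[OF f g pow_car]
    by simp
qed

lemma fdl_map_one: "fdl_map R r 1 (gone HZ) = gone R"
  using fdl_map_eq[OF represents_one] gpow_1[OF r_car] fdl_unit[OF F] by simp

lemma fdl_map_mul:
  assumes a: "a \<in> gcar HZ n" and b: "b \<in> gcar HZ m"
  shows "fdl_map R r (n * m) (gmul HZ n m a b) = gmul R n m (fdl_map R r n a) (fdl_map R r m b)"
proof -
  obtain k f where rf: "represents n a k f" using represents_exists[OF a] .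
  obtain l g where rg: "represents m b l g" using represents_exists[OF b] .
  have f: "ptd_map (2 ^ k) n f" and g: "ptd_map (2 ^ l) m g" using rf rg unfolding represents_def by auto
  have "fdl_map R r (n * m) (gmul HZ n m a b)
      = gact R (2 ^ k * 2 ^ l) (n * m) (smash_map (2 ^ k) n f (2 ^ l) g) (gpow R r (k + l))"
    using fdl_map_eq[OF represents_mul[OF rf rg]] by (simp add: power_add)
  also have "\<dots> = gmul R n m (gact R (2 ^ k) n f (gpow R r k)) (gact R (2 ^ l) m g (gpow R r l))"
    using mul_nat[OF f g pow_car pow_car] gpow_add[OF r_car] by simp
  finally show ?thesis using fdl_map_eq[OF rf] fdl_map_eq[OF rg] by simp
qed

lemma fdl_map_mult_maps: "fdl_map R r \<in> mult_maps HZ R"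
proof -
  have "mult_map HZ R (fdl_map R r)"
    unfolding mult_map_def
    by (simp del: HZ_simps add: fdl_map_car fdl_map_base fdl_map_act fdl_map_one[simplified] fdl_map_mul)
  moreover have "fdl_map R r n x = undefined" if "x \<notin> gcar HZ n" for n x
    using that unfolding fdl_map_def by (simp del: HZ_simps)
  ultimately show ?thesis unfolding mult_maps_def by blast
qed

lemma fdl_map_one_minus_one: "fdl_map R r 2 one_minus_one = r"
  using fdl_map_eq[OF represents_one_minus_one] gpow_1[OF r_car] act_id[OF r_car] by simp

end

lemma fdl_bij:
  assumes R: "discrete_gamma_ring R"
  shows "bij_betw (\<lambda>\<phi>. \<phi> 2 one_minus_one) (mult_maps HZ R) {r. formal_difference_law R r}"
  unfolding bij_betw_def
proof (intro conjI subset_antisym subsetI)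
  show "inj_on (\<lambda>\<phi>. \<phi> 2 one_minus_one) (mult_maps HZ R)"
    using mult_maps_eqI unfolding inj_on_def by blast
next
  fix r assume "r \<in> (\<lambda>\<phi>. \<phi> 2 one_minus_one) ` mult_maps HZ R"
  then show "r \<in> {r. formal_difference_law R r}"
    using mult_map_fdl[OF _ HZ_closed HZ_fdl] unfolding mult_maps_def by auto
next
  fix r assume "r \<in> {r. formal_difference_law R r}"
  then interpret discrete_fdl R r using R by unfold_locales simp_all
  show "r \<in> (\<lambda>\<phi>. \<phi> 2 one_minus_one) ` mult_maps HZ R"
    using fdl_map_mult_maps fdl_map_one_minus_one by (metis imageI)
qed

theorem theorem3p8:
  fixes Rs :: "nat \<Rightarrow> 'a gring"
    and sop :: "nat \<Rightarrow> nat \<Rightarrow> (nat \<Rightarrow> nat) \<Rightarrow> nat \<Rightarrow> 'a \<Rightarrow> 'a"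
  assumes "simplicial_gamma_ring Rs sop"
  shows
    \<comment> \<open>FDL(R)_* is a simplicial set (closed under simplicial operators)\<close>
    "(\<forall>p q \<theta> r. delta_map p q \<theta> \<longrightarrow> formal_difference_law (Rs q) r \<longrightarrow>
        formal_difference_law (Rs p) (sop p q \<theta> 2 r))
   \<and> \<comment> \<open>Gamma(HZ,R)_* is a simplicial set and evaluation at (1,-1) is simplicial\<close>
     (\<forall>p q \<theta> \<phi>. delta_map p q \<theta> \<longrightarrow> \<phi> \<in> mult_maps HZ (Rs q) \<longrightarrow>
        hz_pull sop p q \<theta> \<phi> \<in> mult_maps HZ (Rs p) \<and>
        hz_pull sop p q \<theta> \<phi> 2 one_minus_one = sop p q \<theta> 2 (\<phi> 2 one_minus_one))
   \<and> \<comment> \<open>levelwise bijection\<close>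
     (\<forall>q. bij_betw (\<lambda>\<phi>. \<phi> 2 one_minus_one) (mult_maps HZ (Rs q))
                    {r. formal_difference_law (Rs q) r})
   \<and> \<comment> \<open>naturality in R\<close>
     (\<forall>(Rs' :: nat \<Rightarrow> 'b gring) sop' g. simplicial_gamma_ring Rs' sop' \<longrightarrow>
        simplicial_gamma_ring_map Rs sop Rs' sop' g \<longrightarrow>
        (\<forall>q \<phi>. \<phi> \<in> mult_maps HZ (Rs q) \<longrightarrow>
           hz_post (g q) \<phi> \<in> mult_maps HZ (Rs' q) \<and>
           hz_post (g q) \<phi> 2 one_minus_one = g q 2 (\<phi> 2 one_minus_one)) \<and>
        (\<forall>q r. formal_difference_law (Rs q) r \<longrightarrow> formal_difference_law (Rs' q) (g q 2 r)))"
proof -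
  have disc: "\<And>q. discrete_gamma_ring (Rs q)"
    and sop: "\<And>p q \<theta>. delta_map p q \<theta> \<Longrightarrow> mult_map (Rs q) (Rs p) (sop p q \<theta>)"
    using assms unfolding simplicial_gamma_ring_def by blast+
  have levels: "\<And>(Rs' :: nat \<Rightarrow> 'b gring) sop' g q. simplicial_gamma_ring_map Rs sop Rs' sop' g \<Longrightarrow>
      mult_map (Rs q) (Rs' q) (g q)"
    unfolding simplicial_gamma_ring_map_def by blast
  note fdl_simplicial = mult_map_fdl[OF sop discrete_gamma_ring_closed[OF disc]]
  note maps_simplicial = hz_post_mult_maps[OF _ sop, folded hz_pull_is_hz_post]
  note natural = hz_post_mult_maps[OF _ levels] mult_map_fdl[OF levels discrete_gamma_ring_closed[OF disc]]
  show ?thesis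
    by (intro conjI allI impI) (simp_all add: fdl_simplicial maps_simplicial fdl_bij[OF disc] natural)
qed

end
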